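(* Let $M$ be a path-connected pre-$\Delta$-monoid with identity $e$. If $\alpha_n\in\Omega(M,e)$ is a null-sequence and $\phi:\mathbb{N}\to\mathbb{N}$ is a bijection, then $\prod_{n=1}^\infty\alpha_n\simeq\prod_{n=1}^\infty\alpha_{\phi(n)}$ by a path-homotopy with image in $\mathrm{Im}\left(\prod_{n=1}^\infty\alpha_n\right)\ast\mathrm{Im}\left(\prod_{n=1}^\infty\alpha_n\right)$.
   Context: A pre-$\Delta$-monoid is a space $M$ with an associative operation $\ast$ with identity $e$ such that for any continuous paths $\alpha,\beta:[0,1]\to M$, the pointwise product $t\mapsto\alpha(t)\ast\beta(t)$ is continuous. For $A,B\subseteq M$, $A\ast B=\{a\ast b\mid a\in A,b\in B\}$. A sequence of loops $\alpha_n\in\Omega(M,e)$ is a null-sequence if every neighborhood of $e$ contains $\mathrm{Im}(\alpha_n)$ for all but finitely many $n$; its infinite concatenation $\prod_{n=1}^\infty\alpha_n$ is the loop equal to (a linear reparametrization of) $\alpha_n$ on $[\frac{n-1}{n},\frac{n}{n+1}]$ and sending $1$ to $e$. *)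

theory Defs
  imports "HOL-Analysis.Analysis"
begin

definition pre_Delta_monoid :: "('a::topological_space \<Rightarrow> 'a \<Rightarrow> 'a) \<Rightarrow> 'a \<Rightarrow> bool" where
  "pre_Delta_monoid mul e \<longleftrightarrow>
     (\<forall>x y z. mul (mul x y) z = mul x (mul y z)) \<and>
     (\<forall>x. mul e x = x \<and> mul x e = x) \<and>
     (\<forall>\<alpha> \<beta>. path \<alpha> \<and> path \<beta> \<longrightarrow> path (\<lambda>t. mul (\<alpha> t) (\<beta> t)))"

definition set_mult :: "('a \<Rightarrow> 'a \<Rightarrow> 'a) \<Rightarrow> 'a set \<Rightarrow> 'a set \<Rightarrow> 'a set" where
  "set_mult mul A B = {mul a b | a b. a \<in> A \<and> b \<in> B}"

definition loop_at :: "'a::topological_space \<Rightarrow> (real \<Rightarrow> 'a) \<Rightarrow> bool" where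
  "loop_at e \<gamma> \<longleftrightarrow> path \<gamma> \<and> pathstart \<gamma> = e \<and> pathfinish \<gamma> = e"

definition null_sequence :: "'a::topological_space \<Rightarrow> (nat \<Rightarrow> real \<Rightarrow> 'a) \<Rightarrow> bool" where
  "null_sequence e \<alpha> \<longleftrightarrow>
     (\<forall>n. loop_at e (\<alpha> n)) \<and>
     (\<forall>U. open U \<and> e \<in> U \<longrightarrow> (\<forall>\<^sub>F n in sequentially. path_image (\<alpha> n) \<subseteq> U))"

text \<open>Infinite concatenation. Sequences are indexed from 0: the k-th loop
  (k = n-1 in the paper's 1-based indexing) is run, linearly reparametrised,
  on [k/(k+1), (k+1)/(k+2)], and 1 is sent to e.\<close>
definition inf_concat :: "'a \<Rightarrow> (nat \<Rightarrow> real \<Rightarrow> 'a) \<Rightarrow> real \<Rightarrow> 'a" where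
  "inf_concat e \<alpha> t =
     (if t < 1 then
        (let k = nat \<lfloor>1 / (1 - t)\<rfloor> - 1
         in \<alpha> k ((t - real k / (real k + 1)) * ((real k + 1) * (real k + 2))))
      else e)"

end

theory Submission
  imports Defs
begin

text \<open>Reparametrise the concatenation so that the n-th loop runs on the dyadic block
  [1 - 2^-n, 1 - 2^-(n+1)]. Let \<open>\<sigma>\<^sub>m\<close> be the bijection that agrees with \<open>\<phi>\<close> below m and
  lists the remaining indices in their original order; \<open>\<sigma>\<^sub>m\<^sub>+\<^sub>1\<close> arises from \<open>\<sigma>\<^sub>m\<close> by moving
  the loop at position r, where \<open>\<sigma>\<^sub>m r = \<phi> m\<close>, forward to position m. This move is a homotopy
  inside Im * Im: the concatenation along \<open>\<sigma>\<^sub>m\<close> is the pointwise product of the concatenation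
  with the blocks m, ..., r-1 collapsed and the concatenation of just these blocks, and sliding
  the two factors against each other by one block yields the concatenation along \<open>\<sigma>\<^sub>m\<^sub>+\<^sub>1\<close>.
  Performing the m-th move during the m-th dyadic block of the homotopy parameter gives a
  homotopy on [0, 1) \<times> [0, 1]. It extends continuously to the concatenation along \<open>\<phi>\<close> at
  parameter 1: the m-th move is stationary on the first m blocks, and on the others it only
  multiplies values of loops with large index, which are close to e because the pointwise product
  of the concatenation with itself is continuous at (1, 1).\<close>

section \<open>Dyadic concatenation\<close>

definition dyadic_block :: "real \<Rightarrow> nat" where
  "dyadic_block x = (LEAST j. x < 1 - (1/2)^(Suc j))"

definition dyadic_coord :: "real \<Rightarrow> real" where
  "dyadic_coord x = 2^(Suc (dyadic_block x)) * (x - 1) + 2"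

definition dyadic_point :: "nat \<Rightarrow> real \<Rightarrow> real" where
  "dyadic_point n y = 1 - (1/2)^n + y * (1/2)^(Suc n)"

definition dyadic_concat :: "'a \<Rightarrow> (nat \<Rightarrow> real \<Rightarrow> 'a) \<Rightarrow> real \<Rightarrow> 'a" where
  "dyadic_concat e \<beta> t = (if t < 1 then \<beta> (dyadic_block t) (dyadic_coord t) else e)"

lemma half_power_antimono: "m \<le> n \<Longrightarrow> (1/2::real)^n \<le> (1/2)^m"
  by (simp add: power_decreasing)

lemma dyadic_block_eqI:
  assumes "1 - (1/2)^j \<le> x" "x < 1 - (1/2)^(Suc j)"
  shows "dyadic_block x = j"
  unfolding dyadic_block_def
proof (rule Least_equality)
  show "x < 1 - (1/2)^(Suc j)" by fact
  fix k assume k: "x < 1 - (1/2::real)^(Suc k)"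
  show "j \<le> k"
  proof (rule ccontr)
    assume "\<not> j \<le> k"
    then have "Suc k \<le> j" by simp
    then have "(1/2::real)^j \<le> (1/2)^(Suc k)" by (rule half_power_antimono)
    with assms(1) k show False by linarith
  qed
qed

lemma dyadic_block_bounds:
  assumes "0 \<le> x" "x < 1"
  shows "1 - (1/2)^(dyadic_block x) \<le> x \<and> x < 1 - (1/2)^(Suc (dyadic_block x))"
proof -
  obtain n where n: "(1/2::real)^n < 1 - x"
    using real_arch_pow_inv[of "1 - x" "1/2"] assms by auto
  have ex: "\<exists>j. x < 1 - (1/2::real)^(Suc j)"
  proof
    have "(1/2::real)^(Suc n) \<le> (1/2)^n" by (rule half_power_antimono) simp
    then show "x < 1 - (1/2::real)^(Suc n)" using n by linarith
  qed
  have up: "x < 1 - (1/2)^(Suc (dyadic_block x))"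
    unfolding dyadic_block_def by (rule LeastI_ex[OF ex])
  have low: "1 - (1/2)^(dyadic_block x) \<le> x"
  proof (cases "dyadic_block x")
    case 0 then show ?thesis using assms by simp
  next
    case (Suc k)
    then have "\<not> x < 1 - (1/2)^(Suc k)"
      using not_less_Least[of k "\<lambda>j. x < 1 - (1/2::real)^(Suc j)"] unfolding dyadic_block_def by simp
    then show ?thesis using Suc by simp
  qed
  show ?thesis using up low by simp
qed

lemma dyadic_point_bounds:
  assumes "0 \<le> y" "y < 1"
  shows "1 - (1/2)^n \<le> dyadic_point n y" "dyadic_point n y < 1 - (1/2)^(Suc n)"
proof -
  have "y * (1/2::real)^n < 1 * (1/2)^n" by (rule mult_strict_right_mono) (use assms in auto)
  moreover have "0 \<le> y * (1/2::real)^n" using assms by simp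
  moreover have "y * (1/2::real)^(Suc n) = (y * (1/2)^n) / 2" by simp
  moreover have "(1/2::real)^(Suc n) = (1/2)^n / 2" by simp
  ultimately show "1 - (1/2)^n \<le> dyadic_point n y" "dyadic_point n y < 1 - (1/2)^(Suc n)"
    unfolding dyadic_point_def by linarith+
qed

lemma dyadic_point_less_1: "0 \<le> y \<Longrightarrow> y < 1 \<Longrightarrow> dyadic_point n y < 1"
proof -
  assume "0 \<le> y" "y < 1"
  then have "dyadic_point n y < 1 - (1/2)^(Suc n)" by (rule dyadic_point_bounds)
  moreover have "(0::real) < (1/2)^(Suc n)" by simp
  ultimately show ?thesis by linarith
qed

lemma dyadic_block_point: "0 \<le> y \<Longrightarrow> y < 1 \<Longrightarrow> dyadic_block (dyadic_point n y) = n"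
  using dyadic_point_bounds dyadic_block_eqI by blast

lemma dyadic_coord_point: "0 \<le> y \<Longrightarrow> y < 1 \<Longrightarrow> dyadic_coord (dyadic_point n y) = y"
  unfolding dyadic_coord_def dyadic_block_point
  by (simp add: dyadic_point_def algebra_simps power_mult_distrib[symmetric])

lemma dyadic_point_block_coord:
  assumes "0 \<le> x" "x < 1"
  shows "x = dyadic_point (dyadic_block x) (dyadic_coord x) \<and> 0 \<le> dyadic_coord x \<and> dyadic_coord x < 1"
proof -
  define j where "j = dyadic_block x"
  have b: "1 - (1/2)^j \<le> x" "x < 1 - (1/2)^(Suc j)"
    using dyadic_block_bounds[OF assms] j_def by auto
  have p: "(2::real)^(Suc j) * (1/2)^(Suc j) = 1"
    by (simp add: power_mult_distrib[symmetric])
  have p2: "(2::real)^(Suc j) * (1/2)^j = 2"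
    by (simp add: power_mult_distrib[symmetric])
  have "dyadic_coord x = 2^(Suc j) * (x - 1) + 2" unfolding dyadic_coord_def j_def ..
  moreover have "dyadic_point j (2^(Suc j) * (x - 1) + 2) = x"
    unfolding dyadic_point_def using p p2 by (simp add: algebra_simps)
  moreover have "0 \<le> 2^(Suc j) * (x - 1) + 2"
  proof -
    have "(2::real)^(Suc j) * (1 - x) \<le> 2^(Suc j) * (1/2)^j"
      using b by (intro mult_left_mono) auto
    then show ?thesis using p2 by (simp add: algebra_simps)
  qed
  moreover have "2^(Suc j) * (x - 1) + 2 < (1::real)"
  proof -
    have "(2::real)^(Suc j) * (1/2)^(Suc j) < 2^(Suc j) * (1 - x)"
      using b by (intro mult_strict_left_mono) auto
    then show ?thesis using p by (simp add: algebra_simps)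
  qed
  ultimately show ?thesis by (simp add: j_def)
qed

lemma dyadic_point_cases:
  assumes "0 \<le> x" "x \<le> 1"
  obtains "x = 1" | n y where "0 \<le> y" "y < 1" "x = dyadic_point n y"
  using dyadic_point_block_coord assms by (cases "x = 1") force+

lemma dyadic_concat_point: "0 \<le> y \<Longrightarrow> y < 1 \<Longrightarrow> dyadic_concat e \<beta> (dyadic_point n y) = \<beta> n y"
  using dyadic_point_less_1[of y n] unfolding dyadic_concat_def by (simp add: dyadic_block_point dyadic_coord_point)

lemma dyadic_point_0: "dyadic_point n 0 = 1 - (1/2)^n"
  by (simp add: dyadic_point_def)

lemma dyadic_point_shift: "k \<le> n \<Longrightarrow> 1 - 2^k * (1 - dyadic_point n y) = dyadic_point (n - k) y"
proof -
  assume "k \<le> n"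
  then obtain d where d: "n = k + d" by (metis le_add_diff_inverse)
  have "(2::real)^k * (1/2)^(k + d) = (1/2)^d"
    by (simp add: power_add power_mult_distrib[symmetric])
  moreover have "(2::real)^k * (1/2)^(Suc (k + d)) = (1/2)^(Suc d)"
    by (simp add: power_add power_mult_distrib[symmetric])
  ultimately show ?thesis unfolding dyadic_point_def d by (simp add: algebra_simps)
qed

lemma dyadic_point_less_iff:
  assumes "0 \<le> y" "y < 1" "0 \<le> y'" "y' < 1"
  shows "dyadic_point n y < dyadic_point m y' \<longleftrightarrow> n < m \<or> (n = m \<and> y < y')"
proof -
  have A: "dyadic_point n y < dyadic_point m y'" if "n < m" "0 \<le> y" "y < 1" "0 \<le> y'" "y' < 1" for n m y y'
  proof -
    have "dyadic_point n y < 1 - (1/2)^(Suc n)" by (rule dyadic_point_bounds) fact+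
    also have "\<dots> \<le> 1 - (1/2)^m" using half_power_antimono[of "Suc n" m] that by simp
    also have "\<dots> \<le> dyadic_point m y'" by (rule dyadic_point_bounds) fact+
    finally show ?thesis .
  qed
  show ?thesis
  proof (cases n m rule: linorder_cases)
    case less then show ?thesis using A assms by auto
  next
    case equal then show ?thesis by (auto simp: dyadic_point_def)
  next
    case greater then show ?thesis using A[of m n y' y] assms by auto
  qed
qed

lemma one_minus_dyadic_point: "1 - dyadic_point n y = (1/2)^(Suc n) * (2 - y)"
  by (simp add: dyadic_point_def algebra_simps)

lemma dyadic_point_0_le:
  assumes "n \<le> m" "0 \<le> y" "y < 1"
  shows "dyadic_point n 0 \<le> dyadic_point m y"
proof (cases "n = m")
  case True then show ?thesis using assms by (simp add: dyadic_point_def)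
next
  case False then have "n < m" using assms by simp
  then show ?thesis using dyadic_point_less_iff[of 0 y n m] assms by simp
qed

lemma expanded_dyadic_point_le:
  assumes "Suc n \<le> k + j" "y < 1"
  shows "1 - 2^k * (1 - dyadic_point n y) \<le> 1 - (1/2)^j"
proof -
  have "(1/2::real)^(k + j) \<le> (1/2)^(Suc n)" using assms(1) by (rule half_power_antimono)
  then have "(2::real)^k * (1/2)^(k + j) \<le> 2^k * (1/2)^(Suc n)" by simp
  moreover have "(2::real)^k * (1/2)^(k + j) = (1/2)^j"
    by (simp add: power_add power_mult_distrib[symmetric])
  moreover have "(1/2::real)^(Suc n) \<le> (1/2)^(Suc n) * (2 - y)"
    using assms(2) by (simp add: mult_le_cancel_left1)
  ultimately have "(1/2)^j \<le> 2^k * ((1/2::real)^(Suc n) * (2 - y))"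
    by (smt (verit) mult_left_mono zero_le_power)
  then show ?thesis unfolding one_minus_dyadic_point by simp
qed

lemma dyadic_block_coord_low:
  assumes "0 \<le> s" "s < 1/2"
  shows "dyadic_block s = 0" "dyadic_coord s = 2 * s"
proof -
  show "dyadic_block s = 0" by (rule dyadic_block_eqI) (use assms in auto)
  then show "dyadic_coord s = 2 * s" unfolding dyadic_coord_def by simp
qed

lemma dyadic_block_coord_high:
  assumes "1/2 \<le> s" "s < 1"
  shows "dyadic_block s = Suc (dyadic_block (2 * s - 1))" "dyadic_coord s = dyadic_coord (2 * s - 1)"
proof -
  obtain n y where ny: "0 \<le> y" "y < 1" "s = dyadic_point n y"
    using dyadic_point_block_coord[of s] assms by auto
  have "n \<noteq> 0"
  proof
    assume "n = 0"
    then have "dyadic_point n y < dyadic_point 1 0" using ny dyadic_point_less_iff[of y 0 n 1] by simp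
    then show False using assms ny by (simp add: dyadic_point_def)
  qed
  then have e: "2 * s - 1 = dyadic_point (n - 1) y"
    using dyadic_point_shift[of 1 n y] ny by simp
  show "dyadic_block s = Suc (dyadic_block (2 * s - 1))" "dyadic_coord s = dyadic_coord (2 * s - 1)"
    using e ny \<open>n \<noteq> 0\<close> by (simp_all add: dyadic_block_point dyadic_coord_point)
qed

lemma dyadic_block_ge:
  assumes "1 - (1/2)^N < s" "s < 1"
  shows "N \<le> dyadic_block s"
proof -
  have s0: "0 \<le> s" using assms(1) power_le_one[of "1/2::real" N] by linarith
  obtain n y where ny: "0 \<le> y" "y < 1" "s = dyadic_point n y" using dyadic_point_block_coord[of s] s0 assms(2) by auto
  show ?thesis
  proof (rule ccontr)
    assume "\<not> N \<le> dyadic_block s"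
    then have "n < N" using ny by (simp add: dyadic_block_point)
    then have "dyadic_point n y < dyadic_point N 0" using dyadic_point_less_iff[of y 0 n N] ny by simp
    then show False using assms(1) ny by (simp add: dyadic_point_0)
  qed
qed

lemma dyadic_coord_range: "0 \<le> s \<Longrightarrow> s < 1 \<Longrightarrow> dyadic_coord s \<in> {0..1}"
  using dyadic_point_block_coord[of s] by auto

section \<open>Gluing continuous maps along the dyadic blocks\<close>

lemma continuous_on_glued_first_half:
  fixes f :: "nat \<Rightarrow> real \<times> 'b::topological_space \<Rightarrow> 'c::topological_space"
  assumes "continuous_on ({0..1} \<times> T) (f 0)" and "\<And>t. t \<in> T \<Longrightarrow> f 0 (1,t) = f 1 (0,t)"
  shows "continuous_on ({0..1/2} \<times> T) (\<lambda>p. f (dyadic_block (fst p)) (dyadic_coord (fst p), snd p))"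
    (is "continuous_on _ ?G")
proof (rule continuous_on_eq)
  show "continuous_on ({0..1/2} \<times> T) (\<lambda>p. f 0 (2 * fst p, snd p))"
    by (rule continuous_on_compose2[OF assms(1)]) (auto intro!: continuous_intros)
next
  fix p assume p: "p \<in> {0..1/2::real} \<times> T"
  show "f 0 (2 * fst p, snd p) = ?G p"
  proof (cases "fst p < 1/2")
    case True
    then show ?thesis using p dyadic_block_coord_low[of "fst p"] by auto
  next
    case False
    then have fp: "fst p = 1/2" using p by auto
    have "dyadic_block (1/2) = 1" by (rule dyadic_block_eqI) auto
    moreover have "dyadic_coord (1/2) = 0" using calculation by (simp add: dyadic_coord_def)
    ultimately show ?thesis using assms(2)[of "snd p"] p by (simp add: fp mem_Times_iff)
  qed
qed

text \<open>Induction on N: by \<open>dyadic_block_coord_high\<close>, the part over [1/2, 1) is the same gluing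
  applied to the shifted family \<open>\<lambda>m. f (Suc m)\<close>.\<close>
lemma continuous_on_glued_initial:
  fixes f :: "nat \<Rightarrow> real \<times> 'b::topological_space \<Rightarrow> 'c::topological_space"
  assumes T: "closed T"
    and "\<And>m. continuous_on ({0..1} \<times> T) (f m)"
    and "\<And>m t. t \<in> T \<Longrightarrow> f m (1,t) = f (Suc m) (0,t)"
  shows "continuous_on ({0..1 - (1/2)^N} \<times> T) (\<lambda>p. f (dyadic_block (fst p)) (dyadic_coord (fst p), snd p))"
  using assms(2,3)
proof (induction N arbitrary: f)
  case 0
  have s0: "dyadic_block 0 = 0" "dyadic_coord 0 = 0" using dyadic_block_coord_low[of 0] by auto
  show ?case
  proof (rule continuous_on_eq)
    show "continuous_on ({0..1 - (1/2)^0} \<times> T) (f 0)"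
      by (rule continuous_on_subset[OF 0(1)]) auto
  next
    fix p assume "p \<in> {0..1 - (1/2::real)^0} \<times> T"
    then show "f 0 p = f (dyadic_block (fst p)) (dyadic_coord (fst p), snd p)"
      using s0 by (cases p) auto
  qed
next
  case (Suc N)
  define G where "G = (\<lambda>p. f (dyadic_block (fst p)) (dyadic_coord (fst p), snd p))"
  have c1: "continuous_on ({0..1/2} \<times> T) G"
    unfolding G_def by (rule continuous_on_glued_first_half) (use Suc.prems in auto)
  have IH: "continuous_on ({0..1 - (1/2)^N} \<times> T) (\<lambda>p. f (Suc (dyadic_block (fst p))) (dyadic_coord (fst p), snd p))"
    using Suc.IH[of "\<lambda>m. f (Suc m)"] Suc.prems by auto
  have c2: "continuous_on ({1/2..1 - (1/2)^(Suc N)} \<times> T) G"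
  proof (rule continuous_on_eq)
    show "continuous_on ({1/2..1 - (1/2)^(Suc N)} \<times> T)
        (\<lambda>p. f (Suc (dyadic_block (2 * fst p - 1))) (dyadic_coord (2 * fst p - 1), snd p))"
      by (rule continuous_on_compose2[OF IH, where f = "\<lambda>p. (2 * fst p - 1, snd p)", simplified])
        (auto intro!: continuous_intros)
  next
    fix p assume p: "p \<in> {1/2..1 - (1/2::real)^(Suc N)} \<times> T"
    have "fst p \<le> 1 - (1/2)^(Suc N)" using p by auto
    moreover have "(0::real) < (1/2)^(Suc N)" by simp
    ultimately have "fst p < 1" by linarith
    then show "f (Suc (dyadic_block (2 * fst p - 1))) (dyadic_coord (2 * fst p - 1), snd p) = G p"
      using p dyadic_block_coord_high[of "fst p"] by (auto simp: G_def)
  qed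
  have "{0..1 - (1/2::real)^(Suc N)} = {0..1/2} \<union> {1/2..1 - (1/2)^(Suc N)}"
  proof -
    have "(1/2::real)^(Suc N) \<le> 1/2" using half_power_antimono[of 1 "Suc N"] by simp
    then show ?thesis by auto
  qed
  then have "{0..1 - (1/2::real)^(Suc N)} \<times> T = ({0..1/2} \<times> T) \<union> ({1/2..1 - (1/2)^(Suc N)} \<times> T)"
    by auto
  then show ?case
    using continuous_on_closed_Un[OF closed_Times[OF _ T] closed_Times[OF _ T] c1 c2]
    by (simp add: G_def)
qed

lemma continuous_within_glued:
  fixes f :: "nat \<Rightarrow> real \<times> 'b::{first_countable_topology,t2_space} \<Rightarrow> 'c::topological_space"
  assumes T: "closed T"
    and cf: "\<And>m. continuous_on ({0..1} \<times> T) (f m)"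
    and mt: "\<And>m t. t \<in> T \<Longrightarrow> f m (1,t) = f (Suc m) (0,t)"
    and g: "\<And>p. p \<in> {0..<1} \<times> T \<Longrightarrow> g p = f (dyadic_block (fst p)) (dyadic_coord (fst p), snd p)"
    and st: "0 \<le> s" "s < 1" "t \<in> T"
  shows "continuous (at (s,t) within ({0..1} \<times> T)) g"
proof -
  obtain N where N: "(1/2::real)^N < 1 - s"
    using real_arch_pow_inv[of "1 - s" "1/2"] st by auto
  define G where "G = (\<lambda>p. f (dyadic_block (fst p)) (dyadic_coord (fst p), snd p))"
  have cG: "continuous_on ({0..1 - (1/2)^N} \<times> T) G"
    unfolding G_def using T cf mt by (rule continuous_on_glued_initial)
  have inS: "(s,t) \<in> {0..1 - (1/2)^N} \<times> T" using st N by auto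
  show ?thesis
  proof (rule continuous_within_sequentiallyI)
    fix u :: "nat \<Rightarrow> real \<times> 'b"
    assume u: "u \<longlonglongrightarrow> (s,t)" "\<forall>n. u n \<in> {0..1} \<times> T"
    have "((\<lambda>n. fst (u n)) \<longlongrightarrow> s) sequentially"
      using tendsto_fst[OF u(1)] by simp
    then have ev: "\<forall>\<^sub>F n in sequentially. fst (u n) < 1 - (1/2)^N"
      using N by (intro order_tendstoD) auto
    have ev2: "\<forall>\<^sub>F n in sequentially. u n \<in> {0..1 - (1/2)^N} \<times> T"
      using ev by eventually_elim (use u(2) in \<open>auto simp: mem_Times_iff less_eq_real_def\<close>)
    have "continuous (at (s,t) within ({0..1 - (1/2)^N} \<times> T)) G"
      using cG inS by (simp add: continuous_on_eq_continuous_within)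
    then have "((\<lambda>n. G (u n)) \<longlongrightarrow> G (s,t)) sequentially"
      using continuous_within_tendsto_compose[OF _ ev2 u(1)] by blast
    moreover have "\<forall>\<^sub>F n in sequentially. G (u n) = g (u n)"
      using ev
    proof eventually_elim
      case (elim n)
      have "(0::real) < (1/2)^N" by simp
      then have "fst (u n) < 1" using elim by linarith
      then have "u n \<in> {0..<1} \<times> T" using u(2)[rule_format, of n] by (auto simp: mem_Times_iff)
      then show ?case using g by (simp add: G_def)
    qed
    moreover have "G (s,t) = g (s,t)" using g st by (simp add: G_def)
    ultimately show "((\<lambda>n. g (u n)) \<longlongrightarrow> g (s,t)) sequentially"
      using Lim_transform_eventually by fastforce
  qed
qed

lemma continuous_at_end_glued:
  fixes Hs :: "nat \<Rightarrow> real \<times> real \<Rightarrow> 'a::topological_space" and B :: "real \<Rightarrow> 'a"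
  assumes cB: "continuous_on {0..1} B"
    and pre: "\<And>m s t. s \<in> {0..1} \<Longrightarrow> t \<in> {0..1} \<Longrightarrow> t < 1 - (1/2)^m \<Longrightarrow> Hs m (s, t) = B t"
    and tail: "\<And>V. open V \<Longrightarrow> B 1 \<in> V \<Longrightarrow>
        \<exists>M. \<forall>m\<ge>M. \<forall>s\<in>{0..1}. \<forall>t\<in>{0..1}. 1 - (1/2)^m \<le> t \<longrightarrow> Hs m (s, t) \<in> V"
    and t0: "t0 \<in> {0..1}"
    and g: "\<And>p. g p = (if fst p < 1 then Hs (dyadic_block (fst p)) (dyadic_coord (fst p), snd p) else B (snd p))"
  shows "continuous (at (1, t0) within {0..1} \<times> {0..1}) g"
  unfolding continuous_within_topological
proof (intro allI impI)
  fix V assume V: "open V" "g (1, t0) \<in> V"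
  then have "B t0 \<in> V" by (simp add: g)
  moreover have "continuous (at t0 within {0..1}) B"
    using cB t0 by (simp add: continuous_on_eq_continuous_within)
  ultimately obtain Ob where Ob: "open Ob" "t0 \<in> Ob" "\<And>t. t \<in> {0..1} \<Longrightarrow> t \<in> Ob \<Longrightarrow> B t \<in> V"
    using V(1) unfolding continuous_within_topological by metis
  obtain M W where W: "open W" "t0 \<in> W" "W \<subseteq> Ob"
    and late: "\<And>m s t. M \<le> m \<Longrightarrow> s \<in> {0..1} \<Longrightarrow> t \<in> {0..1} \<Longrightarrow> t \<in> W \<Longrightarrow> 1 - (1/2)^m \<le> t \<Longrightarrow>
        Hs m (s, t) \<in> V"
  proof (cases "t0 < 1")
    case True
    obtain M where "(1/2::real)^M < 1 - t0" using real_arch_pow_inv[of "1 - t0" "1/2"] True by auto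
    moreover have "1 - (1/2::real)^M \<le> 1 - (1/2)^m" if "M \<le> m" for m
      using half_power_antimono[OF that] by simp
    ultimately show thesis
      using Ob by (intro that[of "Ob \<inter> {..< 1 - (1/2)^M}" M]) fastforce+
  next
    case False
    then have "B 1 \<in> V" using t0 \<open>B t0 \<in> V\<close> by auto
    then show thesis using tail[OF V(1)] Ob by (metis order_refl that)
  qed
  show "\<exists>A. open A \<and> (1, t0) \<in> A \<and> (\<forall>y\<in>{0..1} \<times> {0..1}. y \<in> A \<longrightarrow> g y \<in> V)"
  proof (intro exI conjI ballI impI)
    show "open ({1 - (1/2::real)^M <..} \<times> W)" using W(1) by (intro open_Times) auto
    show "(1, t0) \<in> {1 - (1/2::real)^M <..} \<times> W" using W(2) by simp
    fix p assume p: "p \<in> {0..1} \<times> {0..1}" "p \<in> {1 - (1/2::real)^M <..} \<times> W"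
    obtain s t where st: "p = (s, t)" by (cases p)
    have t: "t \<in> {0..1}" "t \<in> W" "B t \<in> V" using Ob(3)[of t] W(3) p st by auto
    show "g p \<in> V"
    proof (cases "s < 1")
      case True
      have "M \<le> dyadic_block s" using dyadic_block_ge[of M s] p st True by auto
      moreover have "dyadic_coord s \<in> {0..1}" using dyadic_coord_range[of s] p st True by auto
      ultimately have "Hs (dyadic_block s) (dyadic_coord s, t) \<in> V"
        using late pre t by (cases "1 - (1/2)^(dyadic_block s) \<le> t") auto
      then show ?thesis using st True by (simp add: g)
    qed (use st t in \<open>simp add: g\<close>)
  qed
qed

lemma continuous_within_dyadic_concat_1:
  assumes lim: "\<And>U. open U \<Longrightarrow> L \<in> U \<Longrightarrow> \<forall>\<^sub>F n in sequentially. \<beta> n ` {0..1} \<subseteq> U"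
  shows "continuous (at 1 within {0..1}) (dyadic_concat L \<beta>)"
  unfolding continuous_within_topological
proof (intro allI impI)
  fix B assume B: "open B" "dyadic_concat L \<beta> 1 \<in> B"
  then have "L \<in> B" by (simp add: dyadic_concat_def)
  then obtain M where M: "\<And>n. n \<ge> M \<Longrightarrow> \<beta> n ` {0..1} \<subseteq> B"
    using lim[OF B(1)] unfolding eventually_sequentially by blast
  show "\<exists>A. open A \<and> 1 \<in> A \<and> (\<forall>y\<in>{0..1}. y \<in> A \<longrightarrow> dyadic_concat L \<beta> y \<in> B)"
  proof (intro exI conjI ballI impI)
    show "open {1 - (1/2::real)^M <..}" by simp
    show "(1::real) \<in> {1 - (1/2)^M <..}" by simp
    fix y :: real assume y: "y \<in> {0..1}" "y \<in> {1 - (1/2)^M <..}"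
    show "dyadic_concat L \<beta> y \<in> B"
    proof (cases "y < 1")
      case True
      then have "M \<le> dyadic_block y" using dyadic_block_ge y by auto
      moreover have "dyadic_coord y \<in> {0..1}" using dyadic_coord_range True y by auto
      ultimately show ?thesis using M[of "dyadic_block y"] True by (auto simp: dyadic_concat_def)
    qed (use \<open>L \<in> B\<close> in \<open>auto simp: dyadic_concat_def\<close>)
  qed
qed

lemma continuous_on_dyadic_concat_chain:
  fixes \<beta> :: "nat \<Rightarrow> real \<Rightarrow> 'c::topological_space"
  assumes cb: "\<And>n. continuous_on {0..1} (\<beta> n)"
    and mt: "\<And>n. \<beta> n 1 = \<beta> (Suc n) 0"
    and lim: "\<And>U. open U \<Longrightarrow> L \<in> U \<Longrightarrow> \<forall>\<^sub>F n in sequentially. \<beta> n ` {0..1} \<subseteq> U"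
  shows "continuous_on {0..1} (dyadic_concat L \<beta>)"
  unfolding continuous_on_eq_continuous_within
proof
  fix x :: real assume x: "x \<in> {0..1}"
  show "continuous (at x within {0..1}) (dyadic_concat L \<beta>)"
  proof (cases "x < 1")
    case True
    define f where "f = (\<lambda>m (p::real \<times> real). \<beta> m (fst p))"
    have "continuous (at (x,0) within ({0..1} \<times> {0::real})) (\<lambda>p. dyadic_concat L \<beta> (fst p))"
    proof (rule continuous_within_glued[where f = f])
      show "\<And>m. continuous_on ({0..1} \<times> {0::real}) (f m)"
        unfolding f_def by (rule continuous_on_compose2[OF cb]) (auto intro!: continuous_intros)
    qed (use True x mt in \<open>auto simp: f_def dyadic_concat_def\<close>)
    then have c2: "continuous (at (x,0) within ((\<lambda>t. (t, 0::real)) ` {0..1})) (\<lambda>p. dyadic_concat L \<beta> (fst p))"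
      by (rule continuous_within_subset) auto
    have "continuous (at x within {0..1}) ((\<lambda>p. dyadic_concat L \<beta> (fst p)) \<circ> (\<lambda>t. (t, 0::real)))"
      by (rule continuous_within_compose) (use c2 in \<open>auto intro!: continuous_intros\<close>)
    then show ?thesis by (simp add: o_def)
  next
    case False
    then show ?thesis using x continuous_within_dyadic_concat_1[OF lim] by simp
  qed
qed

definition sequence_path :: "(nat \<Rightarrow> 'b::real_normed_vector) \<Rightarrow> 'b \<Rightarrow> real \<Rightarrow> 'b" where
  "sequence_path u a = dyadic_concat a (\<lambda>n y. (1 - y) *\<^sub>R u n + y *\<^sub>R u (Suc n))"

lemma sequence_path_props:
  fixes u :: "nat \<Rightarrow> 'b::real_normed_vector"
  assumes lim: "u \<longlonglongrightarrow> a" and C: "convex C" "\<And>n. u n \<in> C" "a \<in> C"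
  shows "continuous_on {0..1} (sequence_path u a)" "\<And>t. t \<in> {0..1} \<Longrightarrow> sequence_path u a t \<in> C"
    "\<And>n. sequence_path u a (dyadic_point n 0) = u n" "sequence_path u a 1 = a"
proof -
  show "continuous_on {0..1} (sequence_path u a)"
    unfolding sequence_path_def
  proof (rule continuous_on_dyadic_concat_chain)
    show "\<And>n. continuous_on {0..1} (\<lambda>y. (1 - y) *\<^sub>R u n + y *\<^sub>R u (Suc n))"
      by (intro continuous_intros)
  next
    fix U assume U: "open U" "a \<in> U"
    then obtain \<epsilon> where \<epsilon>: "\<epsilon> > 0" "ball a \<epsilon> \<subseteq> U" using open_contains_ball by blast
    have ev: "\<forall>\<^sub>F n in sequentially. u n \<in> ball a \<epsilon>"
      using lim \<epsilon>(1) unfolding tendsto_iff by (auto simp: dist_commute)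
    then have ev2: "\<forall>\<^sub>F n in sequentially. u (Suc n) \<in> ball a \<epsilon>"
      using eventually_sequentially_Suc[of "\<lambda>n. u n \<in> ball a \<epsilon>"] by blast
    show "\<forall>\<^sub>F n in sequentially. (\<lambda>y. (1 - y) *\<^sub>R u n + y *\<^sub>R u (Suc n)) ` {0..1} \<subseteq> U"
      using ev ev2
    proof eventually_elim
      case (elim n)
      then show ?case using \<epsilon>(2) convexD_alt[OF convex_ball] by fastforce
    qed
  qed simp
next
  fix t :: real assume t: "t \<in> {0..1}"
  show "sequence_path u a t \<in> C"
  proof (cases "t < 1")
    case True
    obtain n y where "0 \<le> y" "y < 1" "t = dyadic_point n y" using dyadic_point_block_coord[of t] True t by auto
    then show ?thesis unfolding sequence_path_def using convexD_alt[OF C(1) C(2) C(2)] by (simp add: dyadic_concat_point)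
  qed (use C in \<open>simp add: sequence_path_def dyadic_concat_def\<close>)
next
  fix n show "sequence_path u a (dyadic_point n 0) = u n" unfolding sequence_path_def by (simp add: dyadic_concat_point)
next
  show "sequence_path u a 1 = a" by (simp add: sequence_path_def dyadic_concat_def)
qed

lemma dyadic_point_0_tendsto: "(\<lambda>n. dyadic_point n 0) \<longlonglongrightarrow> 1"
proof -
  have "(\<lambda>n. 1 - (1/2::real)^n) \<longlonglongrightarrow> 1 - 0"
    by (intro tendsto_intros LIMSEQ_realpow_zero) auto
  then show ?thesis by (simp add: dyadic_point_0)
qed

lemma dyadic_point_0_in: "dyadic_point n 0 \<in> {0..1}"
  using half_power_antimono[of 0 n] by (simp add: dyadic_point_0)

lemma pre_Delta_monoid_unit:
  assumes "pre_Delta_monoid mul e" shows "mul e x = x" "mul x e = x"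
  using assms unfolding pre_Delta_monoid_def by blast+

text \<open>A convergent sequence in C lies on a path in C (\<open>sequence_path\<close>), so sequential continuity
  of the product follows from the defining property of a pre-Delta-monoid.\<close>
lemma continuous_on_pre_Delta_mult:
  fixes X Y :: "'b::real_normed_vector \<Rightarrow> 'a::topological_space"
  assumes monoid: "pre_Delta_monoid mul e" and "convex C"
    and cX: "continuous_on C X" and cY: "continuous_on C Y"
  shows "continuous_on C (\<lambda>p. mul (X p) (Y p))"
proof (rule continuous_on_sequentiallyI)
  fix u :: "nat \<Rightarrow> 'b" and a
  assume u: "\<forall>n. u n \<in> C" "a \<in> C" "u \<longlonglongrightarrow> a"
  note \<gamma> = sequence_path_props[OF u(3) \<open>convex C\<close> u(1)[rule_format] u(2)]
  define \<gamma> where "\<gamma> = sequence_path u a"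
  have pX: "path (\<lambda>t. X (\<gamma> t))" unfolding path_def \<gamma>_def
    by (rule continuous_on_compose2[OF cX \<gamma>(1)]) (use \<gamma>(2) in blast)
  have pY: "path (\<lambda>t. Y (\<gamma> t))" unfolding path_def \<gamma>_def
    by (rule continuous_on_compose2[OF cY \<gamma>(1)]) (use \<gamma>(2) in blast)
  have "path (\<lambda>t. mul (X (\<gamma> t)) (Y (\<gamma> t)))"
    using monoid pX pY unfolding pre_Delta_monoid_def by blast
  then have "continuous (at 1 within {0..1}) (\<lambda>t. mul (X (\<gamma> t)) (Y (\<gamma> t)))"
    unfolding path_def continuous_on_eq_continuous_within by simp
  then have "(\<lambda>n. mul (X (\<gamma> (dyadic_point n 0))) (Y (\<gamma> (dyadic_point n 0)))) \<longlonglongrightarrow> mul (X (\<gamma> 1)) (Y (\<gamma> 1))"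
    using continuous_within_tendsto_compose'[OF _ dyadic_point_0_in dyadic_point_0_tendsto] by blast
  then show "(\<lambda>n. mul (X (u n)) (Y (u n))) \<longlonglongrightarrow> mul (X a) (Y a)"
    using \<gamma>(3,4) by (simp add: \<gamma>_def)
qed

lemma convex_unit_square: "convex ({0..1::real} \<times> {0..1::real})"
  by (intro convex_Times convex_closed_interval)

section \<open>Harmonic versus dyadic parametrisation\<close>

definition harmonic_point :: "nat \<Rightarrow> real \<Rightarrow> real" where
  "harmonic_point n y = real n / (real n + 1) + y / ((real n + 1) * (real n + 2))"

definition harmonic_block :: "real \<Rightarrow> nat" where
  "harmonic_block t = nat \<lfloor>1 / (1 - t)\<rfloor> - 1"

definition harmonic_coord :: "real \<Rightarrow> real" where
  "harmonic_coord t = (t - real (harmonic_block t) / (real (harmonic_block t) + 1)) * ((real (harmonic_block t) + 1) * (real (harmonic_block t) + 2))"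

lemma inf_concat_harmonic: "inf_concat e \<beta> t = (if t < 1 then \<beta> (harmonic_block t) (harmonic_coord t) else e)"
  unfolding inf_concat_def harmonic_block_def harmonic_coord_def Let_def ..

lemma harmonic_point_eq:
  "harmonic_point n y = (real n * (real n + 2) + y) / ((real n + 1) * (real n + 2))"
proof -
  define N where "N = real n"
  have d: "N + 1 \<noteq> 0" "N + 2 \<noteq> 0" by (simp_all add: N_def add_nonneg_eq_0_iff)
  have "N / (N + 1) = (N * (N + 2)) / ((N + 1) * (N + 2))" using d by simp
  then show ?thesis unfolding harmonic_point_def N_def[symmetric] add_divide_distrib by simp
qed

lemma one_minus_harmonic_point: "1 - harmonic_point n y = (real n + 2 - y) / ((real n + 1) * (real n + 2))"
proof -
  define N where "N = real n"
  have N: "N \<ge> 0" by (simp add: N_def)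
  define D where "D = (N + 1) * (N + 2)"
  have dd: "D \<noteq> 0" using N by (simp add: D_def)
  have "1 - harmonic_point n y = (D - (N * (N + 2) + y)) / D"
    unfolding harmonic_point_eq N_def[symmetric] D_def[symmetric] using dd by (simp add: diff_divide_distrib)
  moreover have "D - (N * (N + 2) + y) = N + 2 - y" by (simp add: D_def algebra_simps)
  ultimately show ?thesis by (simp add: D_def N_def)
qed

lemma harmonic_point_bounds: "0 \<le> y \<Longrightarrow> y < 1 \<Longrightarrow> 0 \<le> harmonic_point n y \<and> harmonic_point n y < 1"
proof -
  assume y: "0 \<le> y" "y < 1"
  define N where "N = real n"
  have N: "N \<ge> 0" by (simp add: N_def)
  have "harmonic_point n y = (N * (N + 2) + y) / ((N + 1) * (N + 2))"
    unfolding harmonic_point_eq N_def ..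
  moreover have "N * (N + 2) + y < (N + 1) * (N + 2)" using y N by (simp add: algebra_simps)
  ultimately show ?thesis using y N by (simp add: divide_less_eq)
qed

lemma harmonic_block_coord_point:
  assumes y: "0 \<le> y" "y < 1"
  shows "harmonic_block (harmonic_point n y) = n" "harmonic_coord (harmonic_point n y) = y"
proof -
  define N where "N = real n"
  have N: "N \<ge> 0" by (simp add: N_def)
  have "1 - harmonic_point n y = (N + 2 - y) / ((N + 1) * (N + 2))"
    unfolding one_minus_harmonic_point N_def ..
  then have q: "1 / (1 - harmonic_point n y) = ((N + 1) * (N + 2)) / (N + 2 - y)"
    by simp
  have pos: "N + 2 - y > 0" using y N by simp
  have l: "N + 1 \<le> ((N + 1) * (N + 2)) / (N + 2 - y)"
    using pos y N by (simp add: le_divide_eq algebra_simps mult_left_mono)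
  have "y * (N + 2) < 1 * (N + 2)" by (rule mult_strict_right_mono) (use y N in auto)
  then have "(N + 1) * (N + 2) < (N + 2) * (N + 2 - y)" by (simp add: algebra_simps)
  then have r: "((N + 1) * (N + 2)) / (N + 2 - y) < N + 2"
    using pos by (simp add: divide_less_eq)
  have "\<lfloor>1 / (1 - harmonic_point n y)\<rfloor> = int n + 1"
    unfolding q by (rule floor_unique) (use l r in \<open>auto simp: N_def\<close>)
  then show harmonic_block: "harmonic_block (harmonic_point n y) = n" unfolding harmonic_block_def by simp
  have "harmonic_coord (harmonic_point n y) = (harmonic_point n y - N / (N + 1)) * ((N + 1) * (N + 2))"
    unfolding harmonic_coord_def harmonic_block N_def ..
  moreover have "harmonic_point n y - N / (N + 1) = y / ((N + 1) * (N + 2))"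
    by (simp add: harmonic_point_def N_def)
  moreover have "(N + 1) * (N + 2) \<noteq> 0" using N by simp
  ultimately show "harmonic_coord (harmonic_point n y) = y" by simp
qed

lemma harmonic_block_bounds:
  assumes "0 \<le> t" "t < 1"
  shows "real (harmonic_block t) + 1 \<le> 1 / (1 - t)" "1 / (1 - t) < real (harmonic_block t) + 2"
proof -
  define q where "q = 1 / (1 - t)"
  have q: "\<lfloor>q\<rfloor> \<ge> 1" using assms by (simp add: q_def)
  then have "1 \<le> nat \<lfloor>q\<rfloor>" using nat_mono[OF q] by simp
  then have "real (harmonic_block t) + 1 = real (nat \<lfloor>q\<rfloor>)"
    unfolding harmonic_block_def q_def[symmetric] by (simp add: of_nat_diff)
  also have "\<dots> = of_int \<lfloor>q\<rfloor>" using q by simp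
  finally have "real (harmonic_block t) + 1 = of_int \<lfloor>q\<rfloor>" .
  then show "real (harmonic_block t) + 1 \<le> 1 / (1 - t)" "1 / (1 - t) < real (harmonic_block t) + 2"
    unfolding q_def[symmetric] by linarith+
qed

lemma harmonic_point_block_coord:
  assumes t: "0 \<le> t" "t < 1"
  shows "0 \<le> harmonic_coord t" "harmonic_coord t < 1" "harmonic_point (harmonic_block t) (harmonic_coord t) = t"
proof -
  define K where "K = real (harmonic_block t)"
  have K: "K \<ge> 0" by (simp add: K_def)
  have q: "K + 1 \<le> 1 / (1 - t)" "1 / (1 - t) < K + 2"
    using harmonic_block_bounds[OF t] by (simp_all add: K_def)
  have coord: "harmonic_coord t = (t - K / (K + 1)) * ((K + 1) * (K + 2))"
    unfolding harmonic_coord_def K_def ..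
  have diff: "t - K / (K + 1) = 1 / (K + 1) - (1 - t)"
    using K t by (simp add: field_simps)
  have "1 - t \<le> 1 / (K + 1)" using q(1) K t by (simp add: field_simps)
  then show "0 \<le> harmonic_coord t" using coord diff K by simp
  have "1 / (K + 2) < 1 - t" using q(2) K t by (simp add: field_simps)
  then have "t - K / (K + 1) < 1 / (K + 1) - 1 / (K + 2)" using diff by linarith
  also have "\<dots> = 1 / ((K + 1) * (K + 2))" using K by (simp add: field_simps)
  finally have "t - K / (K + 1) < 1 / ((K + 1) * (K + 2))" .
  then have "harmonic_coord t < 1 / ((K + 1) * (K + 2)) * ((K + 1) * (K + 2))"
    unfolding coord by (rule mult_strict_right_mono) (use K in simp)
  then show "harmonic_coord t < 1" using K by simp
  show "harmonic_point (harmonic_block t) (harmonic_coord t) = t"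
    unfolding harmonic_point_def K_def[symmetric] coord using K by simp
qed

definition dyadic_to_harmonic :: "real \<Rightarrow> real" where
  "dyadic_to_harmonic = dyadic_concat 1 harmonic_point"

definition harmonic_to_dyadic :: "real \<Rightarrow> real" where
  "harmonic_to_dyadic t = (if t < 1 then dyadic_point (harmonic_block t) (harmonic_coord t) else 1)"

lemma dyadic_to_harmonic_point: "0 \<le> y \<Longrightarrow> y < 1 \<Longrightarrow> dyadic_to_harmonic (dyadic_point n y) = harmonic_point n y"
  by (simp add: dyadic_to_harmonic_def dyadic_concat_point)

lemma dyadic_to_harmonic_1: "dyadic_to_harmonic 1 = 1" by (simp add: dyadic_to_harmonic_def dyadic_concat_def)

lemma harmonic_point_1: "harmonic_point n 1 = harmonic_point (Suc n) 0"
proof -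
  define N where "N = real n"
  have d: "N + 1 \<noteq> 0" "N + 2 \<noteq> 0" "N + 3 \<noteq> 0" by (simp_all add: N_def add_nonneg_eq_0_iff)
  have "harmonic_point n 1 = ((N + 1) * (N + 1)) / ((N + 2) * (N + 1))"
    unfolding harmonic_point_eq N_def[symmetric] by (simp add: algebra_simps)
  also have "\<dots> = ((N + 1) * (N + 3)) / ((N + 2) * (N + 3))" using d by simp
  also have "\<dots> = harmonic_point (Suc n) 0"
    unfolding harmonic_point_eq N_def by (simp add: algebra_simps)
  finally show ?thesis .
qed

lemma dist_1_harmonic_point:
  assumes "0 \<le> y" "y \<le> 1"
  shows "dist 1 (harmonic_point n y) \<le> 1 / (real n + 1)"
proof -
  define N where "N = real n"
  have N: "N \<ge> 0" by (simp add: N_def)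
  have "(N + 2 - y) / ((N + 1) * (N + 2)) \<le> (N + 2) / ((N + 1) * (N + 2))"
    by (rule divide_right_mono) (use assms N in auto)
  also have "\<dots> = 1 / (N + 1)" using N by simp
  finally have "1 - harmonic_point n y \<le> 1 / (N + 1)"
    unfolding one_minus_harmonic_point N_def .
  moreover have "0 \<le> 1 - harmonic_point n y"
    unfolding one_minus_harmonic_point using assms by simp
  ultimately show ?thesis by (simp add: dist_real_def N_def)
qed

lemma continuous_on_dyadic_to_harmonic: "continuous_on {0..1} dyadic_to_harmonic"
  unfolding dyadic_to_harmonic_def
proof (rule continuous_on_dyadic_concat_chain)
  fix n
  show "continuous_on {0..1} (harmonic_point n)"
    unfolding harmonic_point_def by (intro continuous_intros) (simp add: add_nonneg_eq_0_iff)
  show "harmonic_point n 1 = harmonic_point (Suc n) 0" by (rule harmonic_point_1)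
next
  fix U :: "real set" assume "open U" "1 \<in> U"
  then obtain \<epsilon> where \<epsilon>: "\<epsilon> > 0" "ball 1 \<epsilon> \<subseteq> U" using open_contains_ball by blast
  obtain M :: nat where M: "1 / \<epsilon> < M" using reals_Archimedean2 by blast
  show "\<forall>\<^sub>F n in sequentially. harmonic_point n ` {0..1} \<subseteq> U"
    unfolding eventually_sequentially
  proof (intro exI allI impI subsetI)
    fix n x assume n: "M \<le> n" and "x \<in> harmonic_point n ` {0..1}"
    then obtain y where "0 \<le> y" "y \<le> 1" "x = harmonic_point n y" by auto
    then have "dist 1 x \<le> 1 / (real n + 1)" using dist_1_harmonic_point by blast
    also have "\<dots> < \<epsilon>"
    proof -
      have "1 / \<epsilon> < real n + 1" using M n of_nat_mono[OF n] by linarith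
      then show ?thesis using \<epsilon>(1) by (simp add: field_simps)
    qed
    finally show "x \<in> U" using \<epsilon>(2) by auto
  qed
qed

lemma dyadic_to_harmonic_range:
  assumes "x \<in> {0..1}" shows "dyadic_to_harmonic x \<in> {0..1}"
proof -
  have x: "0 \<le> x" "x \<le> 1" using assms by auto
  show ?thesis
  proof (cases rule: dyadic_point_cases[OF x])
    case 1 then show ?thesis by (simp add: dyadic_to_harmonic_1)
  next
    case (2 n y)
    then show ?thesis using harmonic_point_bounds[of y n] dyadic_to_harmonic_point[of y n] by simp
  qed
qed

lemma harmonic_to_dyadic_inverse:
  assumes "x \<in> {0..1}" shows "harmonic_to_dyadic (dyadic_to_harmonic x) = x"
proof -
  have x: "0 \<le> x" "x \<le> 1" using assms by auto
  show ?thesis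
  proof (cases rule: dyadic_point_cases[OF x])
    case 1 then show ?thesis by (simp add: dyadic_to_harmonic_1 harmonic_to_dyadic_def)
  next
    case (2 n y)
    then show ?thesis using harmonic_point_bounds[of y n] harmonic_block_coord_point[of y n] dyadic_to_harmonic_point[of y n]
      by (simp add: harmonic_to_dyadic_def)
  qed
qed

lemma harmonic_to_dyadic_range: "t \<in> {0..1} \<Longrightarrow> harmonic_to_dyadic t \<in> {0..1}"
  using harmonic_point_block_coord[of t] dyadic_point_bounds[of "harmonic_coord t" "harmonic_block t"] dyadic_point_less_1[of "harmonic_coord t" "harmonic_block t"]
  by (auto simp: harmonic_to_dyadic_def) (smt (verit) half_power_antimono le0 power_0)

lemma dyadic_to_harmonic_inverse: "t \<in> {0..1} \<Longrightarrow> dyadic_to_harmonic (harmonic_to_dyadic t) = t"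
  using harmonic_point_block_coord[of t] by (auto simp: harmonic_to_dyadic_def dyadic_to_harmonic_1 dyadic_to_harmonic_point)

lemma continuous_on_harmonic_to_dyadic: "continuous_on {0..1} harmonic_to_dyadic"
proof -
  have "continuous_on (dyadic_to_harmonic ` {0..1}) harmonic_to_dyadic"
    by (rule continuous_on_inv[OF continuous_on_dyadic_to_harmonic]) (auto simp: harmonic_to_dyadic_inverse)
  moreover have "dyadic_to_harmonic ` {0..1} = {0..1}"
    using dyadic_to_harmonic_range dyadic_to_harmonic_inverse harmonic_to_dyadic_range by (auto simp: image_iff) (metis atLeastAtMost_iff)
  ultimately show ?thesis by simp
qed

lemma inf_concat_eq_dyadic_concat: "t \<in> {0..1} \<Longrightarrow> inf_concat e \<beta> t = dyadic_concat e \<beta> (harmonic_to_dyadic t)"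
proof -
  assume t: "t \<in> {0..1}"
  show ?thesis
  proof (cases "t < 1")
    case True
    then show ?thesis
      using harmonic_point_block_coord[of t] t dyadic_concat_point[of "harmonic_coord t" e \<beta> "harmonic_block t"]
      by (simp add: inf_concat_harmonic harmonic_to_dyadic_def)
  next
    case False
    then show ?thesis by (simp add: inf_concat_harmonic harmonic_to_dyadic_def dyadic_concat_def)
  qed
qed

lemma harmonic_to_dyadic_0_1: "harmonic_to_dyadic 0 = 0" "harmonic_to_dyadic 1 = 1"
proof -
  have "dyadic_to_harmonic 0 = 0" using dyadic_to_harmonic_point[of 0 0] by (simp add: dyadic_point_def harmonic_point_def)
  then show "harmonic_to_dyadic 0 = 0" using harmonic_to_dyadic_inverse[of 0] by simp
  show "harmonic_to_dyadic 1 = 1" by (simp add: harmonic_to_dyadic_def)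
qed

lemma dyadic_concat_homotopic_inf_concat:
  assumes "path (dyadic_concat e \<beta>)" "path_image (dyadic_concat e \<beta>) \<subseteq> S"
  shows "homotopic_paths S (dyadic_concat e \<beta>) (inf_concat e \<beta>)"
  by (rule homotopic_paths_reparametrize[OF assms continuous_on_harmonic_to_dyadic _ harmonic_to_dyadic_0_1])
     (use harmonic_to_dyadic_range inf_concat_eq_dyadic_concat[of _ e \<beta>] in auto)

lemma null_sequence_iff:
  "null_sequence e \<beta> \<longleftrightarrow> (\<forall>n. continuous_on {0..1} (\<beta> n) \<and> \<beta> n 0 = e \<and> \<beta> n 1 = e) \<and>
     (\<forall>U. open U \<longrightarrow> e \<in> U \<longrightarrow> (\<forall>\<^sub>F n in sequentially. \<beta> n ` {0..1} \<subseteq> U))"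
  unfolding null_sequence_def loop_at_def path_def pathstart_def pathfinish_def path_image_def
  by blast

lemma null_sequenceD: "null_sequence e \<beta> \<Longrightarrow> continuous_on {0..1} (\<beta> n) \<and> \<beta> n 0 = e \<and> \<beta> n 1 = e"
  unfolding null_sequence_iff by blast

lemma continuous_on_dyadic_concat: "null_sequence e \<beta> \<Longrightarrow> continuous_on {0..1} (dyadic_concat e \<beta>)"
  unfolding null_sequence_iff by (rule continuous_on_dyadic_concat_chain) auto

lemma dyadic_concat_block_start: "null_sequence e \<beta> \<Longrightarrow> dyadic_concat e \<beta> (dyadic_point n 0) = e"
  using dyadic_concat_point[of 0 e \<beta> n] unfolding null_sequence_iff by simp

lemma dyadic_concat_0: "null_sequence e \<beta> \<Longrightarrow> dyadic_concat e \<beta> 0 = e"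
  using dyadic_concat_block_start[of e \<beta> 0] by (simp add: dyadic_point_0)

lemma dyadic_concat_1: "dyadic_concat e \<beta> 1 = e"
  by (simp add: dyadic_concat_def)

lemma null_sequence_reindex:
  assumes "null_sequence e \<beta>" "inj g"
  shows "null_sequence e (\<lambda>n. \<beta> (g n))"
proof -
  have "\<forall>\<^sub>F n in sequentially. \<beta> (g n) ` {0..1} \<subseteq> U" if U: "open U" "e \<in> U" for U
  proof -
    have "\<forall>\<^sub>F n in sequentially. \<beta> n ` {0..1} \<subseteq> U" using assms(1) U by (simp add: null_sequence_iff)
    then have "finite {n. \<not> \<beta> n ` {0..1} \<subseteq> U}"
      by (simp add: cofinite_eq_sequentially[symmetric] eventually_cofinite)
    then have "finite (g -` {n. \<not> \<beta> n ` {0..1} \<subseteq> U})"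
      using assms(2) by (rule finite_vimageI)
    then show ?thesis
      by (simp add: cofinite_eq_sequentially[symmetric] eventually_cofinite vimage_def)
  qed
  moreover have "continuous_on {0..1} (\<beta> (g n)) \<and> \<beta> (g n) 0 = e \<and> \<beta> (g n) 1 = e" for n
    using assms(1) unfolding null_sequence_iff by simp
  ultimately show ?thesis unfolding null_sequence_iff by simp
qed

lemma null_sequence_eventually_shift:
  assumes "null_sequence e \<beta>"
    and loops: "\<And>n. continuous_on {0..1} (\<beta>' n) \<and> \<beta>' n 0 = e \<and> \<beta>' n 1 = e"
    and ev: "\<forall>\<^sub>F j in sequentially. \<beta>' j = \<beta> (j + k) \<or> \<beta>' j = (\<lambda>_. e)"
  shows "null_sequence e \<beta>'"
proof -
  have "\<forall>\<^sub>F j in sequentially. \<beta>' j ` {0..1} \<subseteq> U" if U: "open U" "e \<in> U" for U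
  proof -
    have "\<forall>\<^sub>F n in sequentially. \<beta> n ` {0..1} \<subseteq> U" using assms(1) U by (simp add: null_sequence_iff)
    then have "\<forall>\<^sub>F j in sequentially. \<beta> (j + k) ` {0..1} \<subseteq> U"
      using eventually_sequentially_seg[of "\<lambda>n. \<beta> n ` {0..1} \<subseteq> U" k] by simp
    with ev show ?thesis
      by eventually_elim (use U in auto)
  qed
  then show ?thesis using loops unfolding null_sequence_iff by simp
qed

section \<open>Finite approximations of a permutation\<close>

definition cycle_perm :: "nat \<Rightarrow> nat \<Rightarrow> nat \<Rightarrow> nat" where
  "cycle_perm m r j = (if j < m then j else if j = m then r else if j \<le> r then j - 1 else j)"

definition inv_cycle_perm :: "nat \<Rightarrow> nat \<Rightarrow> nat \<Rightarrow> nat" where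
  "inv_cycle_perm m r i = (if i < m then i else if i < r then i + 1 else if i = r then m else i)"

lemma bij_cycle_perm: "m \<le> r \<Longrightarrow> bij (cycle_perm m r)"
proof (rule o_bij[of "inv_cycle_perm m r"])
  assume "m \<le> r"
  show "inv_cycle_perm m r \<circ> cycle_perm m r = id"
    using \<open>m \<le> r\<close> by (auto simp: fun_eq_iff cycle_perm_def inv_cycle_perm_def)
  show "cycle_perm m r \<circ> inv_cycle_perm m r = id"
    using \<open>m \<le> r\<close> by (auto simp: fun_eq_iff cycle_perm_def inv_cycle_perm_def)
qed

primrec approx_perm :: "(nat \<Rightarrow> nat) \<Rightarrow> nat \<Rightarrow> nat \<Rightarrow> nat" where
  "approx_perm \<phi> 0 = id"
| "approx_perm \<phi> (Suc m) = approx_perm \<phi> m \<circ> cycle_perm m (inv (approx_perm \<phi> m) (\<phi> m))"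

declare approx_perm.simps(2)[simp del]

definition approx_pos :: "(nat \<Rightarrow> nat) \<Rightarrow> nat \<Rightarrow> nat" where
  "approx_pos \<phi> m = inv (approx_perm \<phi> m) (\<phi> m)"

lemma approx_perm_props:
  assumes "bij \<phi>"
  shows "bij (approx_perm \<phi> m) \<and> (\<forall>j<m. approx_perm \<phi> m j = \<phi> j) \<and>
    approx_perm \<phi> m (approx_pos \<phi> m) = \<phi> m \<and> m \<le> approx_pos \<phi> m"
proof (induction m)
  case 0 show ?case by (simp add: approx_pos_def bij_id[unfolded id_def])
next
  case (Suc m)
  define r where "r = approx_pos \<phi> m"
  have b: "bij (approx_perm \<phi> m)" and pre: "\<forall>j<m. approx_perm \<phi> m j = \<phi> j" and sr: "approx_perm \<phi> m r = \<phi> m"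
    and mr: "m \<le> r" using Suc.IH by (auto simp: r_def)
  have eq: "approx_perm \<phi> (Suc m) = approx_perm \<phi> m \<circ> cycle_perm m r" by (simp add: r_def approx_pos_def approx_perm.simps(2))
  have b2: "bij (approx_perm \<phi> (Suc m))" unfolding eq using b bij_cycle_perm[OF mr] by (rule bij_comp[rotated])
  have pre2: "\<forall>j<Suc m. approx_perm \<phi> (Suc m) j = \<phi> j"
  proof (intro allI impI)
    fix j assume "j < Suc m"
    then show "approx_perm \<phi> (Suc m) j = \<phi> j"
    proof (cases "j < m")
      case True then show ?thesis by (simp add: eq cycle_perm_def pre)
    next
      case False then have "j = m" using \<open>j < Suc m\<close> by simp
      then show ?thesis by (simp add: eq cycle_perm_def sr)
    qed
  qed
  define r' where "r' = approx_pos \<phi> (Suc m)"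
  have sr2: "approx_perm \<phi> (Suc m) r' = \<phi> (Suc m)"
    unfolding r'_def approx_pos_def using b2 by (simp add: bij_is_surj surj_f_inv_f)
  have "Suc m \<le> r'"
  proof (rule ccontr)
    assume "\<not> Suc m \<le> r'"
    then have "r' < Suc m" by simp
    then have "\<phi> r' = \<phi> (Suc m)" using pre2 sr2 by auto
    then have "r' = Suc m" using assms by (simp add: bij_is_inj inj_eq)
    with \<open>r' < Suc m\<close> show False by simp
  qed
  then show ?case using b2 pre2 sr2 unfolding r'_def by blast
qed

lemma bij_approx_perm: "bij \<phi> \<Longrightarrow> bij (approx_perm \<phi> m)"
  using approx_perm_props by blast

lemma approx_perm_below: "bij \<phi> \<Longrightarrow> j < m \<Longrightarrow> approx_perm \<phi> m j = \<phi> j"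
  using approx_perm_props by blast

lemma approx_pos_ge: "bij \<phi> \<Longrightarrow> m \<le> approx_pos \<phi> m"
  using approx_perm_props by blast

lemma approx_perm_Suc:
  "approx_perm \<phi> (Suc m) j = (if j < m then approx_perm \<phi> m j else if j = m then approx_perm \<phi> m (approx_pos \<phi> m)
      else if j \<le> approx_pos \<phi> m then approx_perm \<phi> m (j - 1) else approx_perm \<phi> m j)"
proof -
  have "approx_perm \<phi> (Suc m) j = approx_perm \<phi> m (cycle_perm m (approx_pos \<phi> m) j)"
    unfolding approx_perm.simps(2) approx_pos_def by simp
  then show ?thesis unfolding cycle_perm_def by simp
qed

lemma approx_perm_tail:
  assumes "bij \<phi>"
  shows "\<exists>M. \<forall>m\<ge>M. \<forall>j\<ge>m. N \<le> approx_perm \<phi> m j"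
proof -
  define M where "M = Suc (Max (inv \<phi> ` {..<N}))"
  have M: "\<And>i. i < N \<Longrightarrow> inv \<phi> i < M"
    unfolding M_def by (intro le_imp_less_Suc Max_ge) auto
  show ?thesis
  proof (intro exI allI impI)
    fix m j assume m: "M \<le> m" and j: "m \<le> j"
    show "N \<le> approx_perm \<phi> m j"
    proof (rule ccontr)
      assume "\<not> N \<le> approx_perm \<phi> m j"
      then have lt: "approx_perm \<phi> m j < N" by simp
      define i where "i = inv \<phi> (approx_perm \<phi> m j)"
      have "i < m" using M[OF lt] m by (simp add: i_def)
      have "\<phi> i = approx_perm \<phi> m j" unfolding i_def using assms by (simp add: bij_is_surj surj_f_inv_f)
      moreover have "approx_perm \<phi> m i = \<phi> i" using approx_perm_below[OF assms \<open>i < m\<close>] .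
      ultimately have "approx_perm \<phi> m i = approx_perm \<phi> m j" by simp
      then have "i = j" using bij_approx_perm[OF assms] by (metis bij_is_inj injD)
      with \<open>i < m\<close> j show False by simp
    qed
  qed
qed

definition squeeze :: "nat \<Rightarrow> nat \<Rightarrow> real \<Rightarrow> real" where
  "squeeze c k t = max (min t (1 - (1/2)^c)) (1 - 2^k * (1 - t))"

lemma squeeze_le: "t \<le> 1 \<Longrightarrow> squeeze c k t \<le> t"
proof -
  assume "t \<le> 1"
  then have "1 * (1 - t) \<le> (2::real)^k * (1 - t)" by (intro mult_right_mono) auto
  then show ?thesis by (simp add: squeeze_def)
qed

lemma squeeze_dyadic_point:
  assumes y: "0 \<le> y" "y < 1"
  shows "squeeze c k (dyadic_point n y) =
    (if n < c then dyadic_point n y else if n < c + k then dyadic_point c 0 else dyadic_point (n - k) y)"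
proof -
  have le: "squeeze c k (dyadic_point n y) \<le> dyadic_point n y"
    using dyadic_point_less_1[OF y, of n] by (intro squeeze_le) simp
  consider "n < c" | "c \<le> n" "n < c + k" | "c + k \<le> n" by linarith
  then show ?thesis
  proof cases
    case 1
    then have "dyadic_point n y < dyadic_point c 0" using dyadic_point_less_iff[of y 0 n c] y by simp
    then show ?thesis using 1 le by (auto simp: squeeze_def dyadic_point_0)
  next
    case 2
    have "dyadic_point c 0 \<le> dyadic_point n y" using dyadic_point_0_le[of c n y] 2 y by simp
    moreover have "1 - 2^k * (1 - dyadic_point n y) \<le> 1 - (1/2)^c"
      by (rule expanded_dyadic_point_le) (use 2 y in auto)
    ultimately show ?thesis using 2 by (simp add: squeeze_def dyadic_point_0)
  next
    case 3
    have "1 - 2^k * (1 - dyadic_point n y) = dyadic_point (n - k) y"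
      by (rule dyadic_point_shift) (use 3 in auto)
    moreover have "dyadic_point c 0 \<le> dyadic_point (n - k) y"
      using dyadic_point_0_le[of c "n - k" y] y 3 by simp
    moreover have "dyadic_point c 0 \<le> dyadic_point n y"
      using dyadic_point_0_le[of c n y] y 3 by simp
    ultimately show ?thesis using 3 by (simp add: squeeze_def dyadic_point_0)
  qed
qed

lemma squeeze_0: "squeeze c k 0 = 0"
proof -
  have "(1/2::real)^c \<le> 1" "1 \<le> (2::real)^k" by (simp_all add: power_le_one)
  then show ?thesis by (simp add: squeeze_def)
qed

lemma squeeze_1: "squeeze c k 1 = 1"
  by (simp add: squeeze_def)

lemma squeeze_range: "t \<in> {0..1} \<Longrightarrow> squeeze c k t \<in> {0..1}"
proof -
  assume t: "t \<in> {0..1}"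
  have "(1/2::real)^c \<le> 1" by (simp add: power_le_one)
  moreover have "0 \<le> (2::real)^k * (1 - t)" using t by simp
  ultimately show ?thesis using t unfolding squeeze_def by auto
qed

lemma squeeze_ge:
  assumes "1 - (1/2)^j \<le> t" "j \<le> c"
  shows "1 - (1/2)^j \<le> squeeze c k t"
  using assms half_power_antimono[of j c] unfolding squeeze_def by (simp add: le_max_iff_disj)

definition swap_param :: "nat \<Rightarrow> nat \<Rightarrow> real \<times> real \<Rightarrow> real" where
  "swap_param m k p = (1 - fst p) * squeeze m k (snd p) + fst p * squeeze (Suc m) k (snd p)"

definition shift_param :: "real \<times> real \<Rightarrow> real" where
  "shift_param p = (1 - fst p) * snd p + fst p * squeeze 0 1 (snd p)"

lemma convex_comb_unit_interval:
  assumes "a \<in> {0..1}" "b \<in> {0..1}" "s \<in> {0..1::real}"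
  shows "(1 - s) * a + s * b \<in> {0..1}"
proof -
  have "(1 - s) * a + s * b \<le> (1 - s) * 1 + s * 1"
    using assms by (intro add_mono mult_left_mono) auto
  moreover have "0 \<le> (1 - s) * a + s * b" using assms by simp
  ultimately show ?thesis by simp
qed

lemma swap_param_range: "p \<in> {0..1} \<times> {0..1} \<Longrightarrow> swap_param m k p \<in> {0..1}"
  unfolding swap_param_def by (intro convex_comb_unit_interval squeeze_range) auto

lemma shift_param_range: "p \<in> {0..1} \<times> {0..1} \<Longrightarrow> shift_param p \<in> {0..1}"
  unfolding shift_param_def by (intro convex_comb_unit_interval squeeze_range) auto

lemma continuous_on_swap_param: "continuous_on S (swap_param m k)"
  unfolding swap_param_def squeeze_def by (intro continuous_intros)

lemma continuous_on_shift_param: "continuous_on S shift_param"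
  unfolding shift_param_def squeeze_def by (intro continuous_intros)

definition concat_values :: "'a \<Rightarrow> (nat \<Rightarrow> real \<Rightarrow> 'a) \<Rightarrow> 'a set" where
  "concat_values e \<alpha> = insert e {\<alpha> n y |n y. 0 \<le> y \<and> y < 1}"

lemma set_multI: "a \<in> A \<Longrightarrow> b \<in> B \<Longrightarrow> mul a b \<in> set_mult mul A B"
  unfolding set_mult_def by blast

definition tail_values :: "'a \<Rightarrow> (nat \<Rightarrow> real \<Rightarrow> 'a) \<Rightarrow> nat \<Rightarrow> 'a set" where
  "tail_values e \<alpha> N = insert e {\<alpha> k y |k y. 0 \<le> y \<and> y < 1 \<and> N \<le> k}"

lemma tail_values_subset_image: "tail_values e \<alpha> N \<subseteq> dyadic_concat e \<alpha> ` {1 - (1/2)^N..1}"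
proof
  fix a assume "a \<in> tail_values e \<alpha> N"
  then consider "a = e" | k y where "a = \<alpha> k y" "0 \<le> y" "y < 1" "N \<le> k"
    unfolding tail_values_def by blast
  then show "a \<in> dyadic_concat e \<alpha> ` {1 - (1/2)^N..1}"
  proof cases
    case 1 then show ?thesis
      by (intro image_eqI[of _ _ 1]) (simp_all add: dyadic_concat_1 power_le_one)
  next
    case (2 k y)
    have "dyadic_point N 0 \<le> dyadic_point k y" using dyadic_point_0_le[of N k y] 2 by simp
    moreover have "dyadic_point k y < 1" using dyadic_point_less_1[of y k] 2 by simp
    ultimately show ?thesis using 2
      by (intro image_eqI[of _ _ "dyadic_point k y"]) (simp_all add: dyadic_point_0 dyadic_concat_point)
  qed
qed

text \<open>Continuity at (1, 1) of the pointwise product of the concatenation with itself.\<close>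
lemma tail_values_mult_subset:
  assumes monoid: "pre_Delta_monoid mul e" and null: "null_sequence e \<alpha>" and V: "open V" "e \<in> V"
  shows "\<exists>N. set_mult mul (tail_values e \<alpha> N) (tail_values e \<alpha> N) \<subseteq> V"
proof -
  define A where "A = dyadic_concat e \<alpha>"
  have cA: "continuous_on {0..1} A" unfolding A_def by (rule continuous_on_dyadic_concat[OF null])
  have "continuous_on ({0..1} \<times> {0..1}) (\<lambda>p. mul (A (fst p)) (A (snd p)))"
    by (rule continuous_on_pre_Delta_mult[OF monoid convex_unit_square];
        rule continuous_on_compose2[OF cA]) (auto intro!: continuous_intros)
  then have "continuous (at (1, 1) within {0..1} \<times> {0..1}) (\<lambda>p. mul (A (fst p)) (A (snd p)))"
    by (simp add: continuous_on_eq_continuous_within)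
  moreover have "mul (A 1) (A 1) = e"
    by (simp add: A_def dyadic_concat_1 pre_Delta_monoid_unit[OF monoid])
  ultimately obtain Ob where Ob: "open Ob" "(1, 1) \<in> Ob"
    "\<And>q. q \<in> {0..1} \<times> {0..1} \<Longrightarrow> q \<in> Ob \<Longrightarrow> mul (A (fst q)) (A (snd q)) \<in> V"
    using V unfolding continuous_within_topological by (metis fst_conv snd_conv)
  obtain \<epsilon> where \<epsilon>: "\<epsilon> > 0" "ball (1, 1) \<epsilon> \<subseteq> Ob" using Ob(1,2) open_contains_ball by blast
  obtain N where N: "(1/2::real)^N < \<epsilon> / 2" using real_arch_pow_inv[of "\<epsilon> / 2" "1/2"] \<epsilon>(1) by auto
  show ?thesis
  proof (intro exI subsetI)
    fix x assume "x \<in> set_mult mul (tail_values e \<alpha> N) (tail_values e \<alpha> N)"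
    then obtain a b where x: "x = mul a b" and ab: "a \<in> tail_values e \<alpha> N" "b \<in> tail_values e \<alpha> N"
      unfolding set_mult_def by blast
    obtain u where u: "1 - (1/2)^N \<le> u" "u \<le> 1" "a = A u"
      using subsetD[OF tail_values_subset_image ab(1)] unfolding A_def by (auto simp: image_iff)
    obtain v where v: "1 - (1/2)^N \<le> v" "v \<le> 1" "b = A v"
      using subsetD[OF tail_values_subset_image ab(2)] unfolding A_def by (auto simp: image_iff)
    have "dist (1, 1) (u, v) \<le> dist 1 u + dist 1 v"
      unfolding dist_Pair_Pair by (rule sqrt_sum_squares_le_sum_abs[THEN order_trans]) (simp add: dist_real_def)
    also have "\<dots> \<le> (1/2)^N + (1/2)^N" using u v by (simp add: dist_real_def)
    also have "\<dots> < \<epsilon>" using N by simp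
    finally have "(u, v) \<in> Ob" using \<epsilon>(2) by auto
    moreover have "(u, v) \<in> {0..1} \<times> {0..1}" using u v power_le_one[of "1/2::real" N] by auto
    ultimately show "x \<in> V" using Ob(3)[of "(u, v)"] x u(3) v(3) by simp
  qed
qed

lemma concat_values_subset_path_image: "concat_values e \<alpha> \<subseteq> path_image (inf_concat e \<alpha>)"
proof
  fix x assume "x \<in> concat_values e \<alpha>"
  then consider "x = e" | n y where "x = \<alpha> n y" "0 \<le> y" "y < 1" unfolding concat_values_def by blast
  then show "x \<in> path_image (inf_concat e \<alpha>)"
  proof cases
    case 1
    have "inf_concat e \<alpha> 1 = e" by (simp add: inf_concat_harmonic)
    then show ?thesis using 1 unfolding path_image_def by (intro image_eqI[of _ _ 1]) auto
  next
    case (2 n y)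
    have "inf_concat e \<alpha> (harmonic_point n y) = \<alpha> n y"
      using harmonic_point_bounds[OF 2(2,3)] harmonic_block_coord_point[OF 2(2,3)]
      by (simp add: inf_concat_harmonic)
    then show ?thesis
      using 2 harmonic_point_bounds[OF 2(2,3), of n] unfolding path_image_def
      by (intro image_eqI[of _ _ "harmonic_point n y"]) auto
  qed
qed

lemma dyadic_concat_reindex_values:
  assumes "x \<in> {0..1}"
  shows "dyadic_concat e (\<lambda>j. \<alpha> (g j)) x \<in> concat_values e \<alpha>"
proof -
  have x: "0 \<le> x" "x \<le> 1" using assms by auto
  show ?thesis
    by (cases rule: dyadic_point_cases[OF x]) (auto simp: dyadic_concat_1 dyadic_concat_point concat_values_def)
qed

lemma concat_values_subset_set_mult:
  "pre_Delta_monoid mul e \<Longrightarrow> concat_values e \<alpha> \<subseteq> set_mult mul (concat_values e \<alpha>) (concat_values e \<alpha>)"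
  using set_multI[of _ "concat_values e \<alpha>" e "concat_values e \<alpha>" mul]
  by (auto simp: pre_Delta_monoid_unit concat_values_def)

section \<open>Moving one loop forward\<close>

definition skip_segment :: "(nat \<Rightarrow> real \<Rightarrow> 'a) \<Rightarrow> (nat \<Rightarrow> nat) \<Rightarrow> nat \<Rightarrow> nat \<Rightarrow> real \<Rightarrow> 'a" where
  "skip_segment \<alpha> \<phi> m j =
     (if j < m then \<alpha> (approx_perm \<phi> m j) else \<alpha> (approx_perm \<phi> m (j + (approx_pos \<phi> m - m))))"

definition segment :: "'a \<Rightarrow> (nat \<Rightarrow> real \<Rightarrow> 'a) \<Rightarrow> (nat \<Rightarrow> nat) \<Rightarrow> nat \<Rightarrow> nat \<Rightarrow> real \<Rightarrow> 'a" where
  "segment e \<alpha> \<phi> m j = (if m \<le> j \<and> j < approx_pos \<phi> m then \<alpha> (approx_perm \<phi> m j) else (\<lambda>_. e))"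

text \<open>With r = \<open>approx_pos \<phi> m\<close>: at s = 0 the first factor is the concatenation along
  \<open>approx_perm \<phi> m\<close> with the blocks m, ..., r-1 replaced by constant loops, and the second
  factor consists of just these blocks; at s = 1 the gap in the first factor has moved past block m
  and the second factor is shifted by one block.\<close>
definition swap_homotopy ::
  "('a \<Rightarrow> 'a \<Rightarrow> 'a) \<Rightarrow> 'a \<Rightarrow> (nat \<Rightarrow> real \<Rightarrow> 'a) \<Rightarrow> (nat \<Rightarrow> nat) \<Rightarrow> nat \<Rightarrow> real \<times> real \<Rightarrow> 'a" where
  "swap_homotopy mul e \<alpha> \<phi> m p =
     mul (dyadic_concat e (skip_segment \<alpha> \<phi> m) (swap_param m (approx_pos \<phi> m - m) p))
         (dyadic_concat e (segment e \<alpha> \<phi> m) (shift_param p))"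

lemma null_sequence_approx_perm:
  "null_sequence e \<alpha> \<Longrightarrow> bij \<phi> \<Longrightarrow> null_sequence e (\<lambda>j. \<alpha> (approx_perm \<phi> m j))"
  using null_sequence_reindex bij_approx_perm bij_is_inj by blast

lemma null_sequence_skip_segment:
  assumes "null_sequence e \<alpha>" "bij \<phi>"
  shows "null_sequence e (skip_segment \<alpha> \<phi> m)"
proof (rule null_sequence_eventually_shift[OF null_sequence_approx_perm[OF assms], where k = "approx_pos \<phi> m - m"])
  fix n show "continuous_on {0..1} (skip_segment \<alpha> \<phi> m n) \<and> skip_segment \<alpha> \<phi> m n 0 = e \<and> skip_segment \<alpha> \<phi> m n 1 = e"
    using null_sequenceD[OF assms(1)] by (simp add: skip_segment_def)
next
  show "\<forall>\<^sub>F j in sequentially. skip_segment \<alpha> \<phi> m j = \<alpha> (approx_perm \<phi> m (j + (approx_pos \<phi> m - m)))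
          \<or> skip_segment \<alpha> \<phi> m j = (\<lambda>_. e)"
    unfolding eventually_sequentially by (rule exI[of _ m]) (simp add: skip_segment_def)
qed

lemma null_sequence_segment:
  assumes "null_sequence e \<alpha>" "bij \<phi>"
  shows "null_sequence e (segment e \<alpha> \<phi> m)"
proof (rule null_sequence_eventually_shift[OF null_sequence_approx_perm[OF assms], where k = 0])
  fix n show "continuous_on {0..1} (segment e \<alpha> \<phi> m n) \<and> segment e \<alpha> \<phi> m n 0 = e \<and> segment e \<alpha> \<phi> m n 1 = e"
    using null_sequenceD[OF assms(1)] by (simp add: segment_def)
next
  show "\<forall>\<^sub>F j in sequentially. segment e \<alpha> \<phi> m j = \<alpha> (approx_perm \<phi> m (j + 0)) \<or> segment e \<alpha> \<phi> m j = (\<lambda>_. e)"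
    unfolding eventually_sequentially by (rule exI[of _ "approx_pos \<phi> m"]) (simp add: segment_def)
qed

lemma segment_below:
  assumes "x \<in> {0..1}" "x < dyadic_point m 0"
  shows "dyadic_concat e (segment e \<alpha> \<phi> m) x = e"
proof -
  have x: "0 \<le> x" "x \<le> 1" using assms by auto
  show ?thesis
  proof (cases rule: dyadic_point_cases[OF x])
    case 1 then show ?thesis by (simp add: dyadic_concat_1)
  next
    case (2 n y)
    then have "n < m" using assms(2) dyadic_point_0_le[of m n y] by force
    then show ?thesis using 2 by (simp add: dyadic_concat_point segment_def)
  qed
qed

lemma swap_param_ge:
  assumes "s \<in> {0..1}" "1 - (1/2)^m \<le> t"
  shows "dyadic_point m 0 \<le> swap_param m k (s, t)"
proof -
  have "1 - (1/2)^m \<le> squeeze m k t" "1 - (1/2)^m \<le> squeeze (Suc m) k t"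
    using assms(2) by (auto intro: squeeze_ge)
  then have "(1 - s) * (1 - (1/2)^m) + s * (1 - (1/2)^m) \<le> swap_param m k (s, t)"
    unfolding swap_param_def using assms(1) by (auto intro!: add_mono mult_left_mono)
  then show ?thesis by (simp add: dyadic_point_0 algebra_simps)
qed

lemma skip_segment_tail_values:
  assumes "x \<in> {0..1}" "dyadic_point m 0 \<le> x"
  shows "dyadic_concat e (skip_segment \<alpha> \<phi> m) x \<in> insert e {\<alpha> (approx_perm \<phi> m j) y |j y. 0 \<le> y \<and> y < 1 \<and> m \<le> j}"
proof -
  have x: "0 \<le> x" "x \<le> 1" using assms by auto
  show ?thesis
  proof (cases rule: dyadic_point_cases[OF x])
    case 1 then show ?thesis by (simp add: dyadic_concat_1)
  next
    case (2 n y)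
    then have "m \<le> n" using assms(2) dyadic_point_less_iff[of y 0 n m] by (cases "n < m") auto
    with 2 show ?thesis
      by (auto simp: dyadic_concat_point skip_segment_def intro!: exI[of _ "n + (approx_pos \<phi> m - m)"])
  qed
qed

lemma segment_tail_values:
  assumes "x \<in> {0..1}"
  shows "dyadic_concat e (segment e \<alpha> \<phi> m) x \<in> insert e {\<alpha> (approx_perm \<phi> m j) y |j y. 0 \<le> y \<and> y < 1 \<and> m \<le> j}"
proof -
  have x: "0 \<le> x" "x \<le> 1" using assms by auto
  show ?thesis
    by (cases rule: dyadic_point_cases[OF x]) (auto simp: dyadic_concat_1 dyadic_concat_point segment_def)
qed

lemma skip_segment_values:
  assumes "x \<in> {0..1}" shows "dyadic_concat e (skip_segment \<alpha> \<phi> m) x \<in> concat_values e \<alpha>"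
proof -
  have x: "0 \<le> x" "x \<le> 1" using assms by auto
  show ?thesis
    by (cases rule: dyadic_point_cases[OF x])
      (auto simp: dyadic_concat_1 dyadic_concat_point skip_segment_def concat_values_def)
qed

lemma segment_values:
  assumes "x \<in> {0..1}" shows "dyadic_concat e (segment e \<alpha> \<phi> m) x \<in> concat_values e \<alpha>"
proof -
  have x: "0 \<le> x" "x \<le> 1" using assms by auto
  show ?thesis
    by (cases rule: dyadic_point_cases[OF x])
      (auto simp: dyadic_concat_1 dyadic_concat_point segment_def concat_values_def)
qed

context
  fixes mul :: "'a::topological_space \<Rightarrow> 'a \<Rightarrow> 'a" and e :: 'a
    and \<alpha> :: "nat \<Rightarrow> real \<Rightarrow> 'a" and \<phi> :: "nat \<Rightarrow> nat"
  assumes monoid: "pre_Delta_monoid mul e" and null: "null_sequence e \<alpha>" and bij: "bij \<phi>"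
begin

lemma swap_homotopy_start:
  assumes "t \<in> {0..1}"
  shows "swap_homotopy mul e \<alpha> \<phi> m (0, t) = dyadic_concat e (\<lambda>j. \<alpha> (approx_perm \<phi> m j)) t"
proof -
  have t: "0 \<le> t" "t \<le> 1" using assms by auto
  have m: "m \<le> approx_pos \<phi> m" using approx_pos_ge[OF bij] .
  show ?thesis
  proof (cases rule: dyadic_point_cases[OF t])
    case 1 then show ?thesis
      by (simp add: swap_homotopy_def swap_param_def shift_param_def squeeze_1 dyadic_concat_1
          pre_Delta_monoid_unit[OF monoid])
  next
    case (2 n y)
    then show ?thesis
      using m null_sequenceD[OF null]
      by (auto simp: swap_homotopy_def swap_param_def shift_param_def squeeze_dyadic_point
          dyadic_concat_point skip_segment_def segment_def pre_Delta_monoid_unit[OF monoid])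
  qed
qed

lemma swap_homotopy_finish:
  assumes "t \<in> {0..1}"
  shows "swap_homotopy mul e \<alpha> \<phi> m (1, t) = dyadic_concat e (\<lambda>j. \<alpha> (approx_perm \<phi> (Suc m) j)) t"
proof -
  have t: "0 \<le> t" "t \<le> 1" using assms by auto
  have m: "m \<le> approx_pos \<phi> m" using approx_pos_ge[OF bij] .
  show ?thesis
  proof (cases rule: dyadic_point_cases[OF t])
    case 1 then show ?thesis
      by (simp add: swap_homotopy_def swap_param_def shift_param_def squeeze_1 dyadic_concat_1
          pre_Delta_monoid_unit[OF monoid])
  next
    case (2 n y)
    then show ?thesis
      using m null_sequenceD[OF null]
      by (auto simp: swap_homotopy_def swap_param_def shift_param_def squeeze_dyadic_point approx_perm_Suc
          dyadic_concat_point skip_segment_def segment_def pre_Delta_monoid_unit[OF monoid])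
  qed
qed

lemma continuous_on_swap_homotopy: "continuous_on ({0..1} \<times> {0..1}) (swap_homotopy mul e \<alpha> \<phi> m)"
proof -
  have "continuous_on ({0..1} \<times> {0..1})
      (\<lambda>p. dyadic_concat e (skip_segment \<alpha> \<phi> m) (swap_param m (approx_pos \<phi> m - m) p))"
    by (rule continuous_on_compose2[OF continuous_on_dyadic_concat[OF null_sequence_skip_segment[OF null bij]]
          continuous_on_swap_param]) (use swap_param_range in blast)
  moreover have "continuous_on ({0..1} \<times> {0..1}) (\<lambda>p. dyadic_concat e (segment e \<alpha> \<phi> m) (shift_param p))"
    by (rule continuous_on_compose2[OF continuous_on_dyadic_concat[OF null_sequence_segment[OF null bij]]
          continuous_on_shift_param]) (use shift_param_range in blast)
  ultimately show ?thesis
    unfolding swap_homotopy_def[abs_def] by (rule continuous_on_pre_Delta_mult[OF monoid convex_unit_square])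
qed

lemma swap_homotopy_ends: "swap_homotopy mul e \<alpha> \<phi> m (s, 0) = e" "swap_homotopy mul e \<alpha> \<phi> m (s, 1) = e"
  by (simp_all add: swap_homotopy_def swap_param_def shift_param_def squeeze_0 squeeze_1
      dyadic_concat_0 null_sequence_skip_segment[OF null bij] null_sequence_segment[OF null bij]
      dyadic_concat_1 pre_Delta_monoid_unit[OF monoid])

lemma swap_homotopy_initial:
  assumes s: "s \<in> {0..1}" and t: "t \<in> {0..1}" and tm: "t < 1 - (1/2)^m"
  shows "swap_homotopy mul e \<alpha> \<phi> m (s, t) = dyadic_concat e (\<lambda>j. \<alpha> (\<phi> j)) t"
proof -
  have "t < 1" using tm by (smt (verit) zero_less_power zero_less_divide_1_iff)
  then obtain n y where ny: "0 \<le> y" "y < 1" "t = dyadic_point n y"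
    using dyadic_point_block_coord[of t] t by auto
  have nm: "n < m"
  proof (rule ccontr)
    assume "\<not> n < m"
    then have "dyadic_point m 0 \<le> dyadic_point n y" using dyadic_point_0_le[of m n y] ny by simp
    then show False using tm ny by (simp add: dyadic_point_0)
  qed
  have "swap_param m (approx_pos \<phi> m - m) (s, t) = t"
    using nm ny by (simp add: swap_param_def squeeze_dyadic_point algebra_simps)
  moreover have "dyadic_concat e (segment e \<alpha> \<phi> m) (shift_param (s, t)) = e"
  proof (rule segment_below)
    show "shift_param (s, t) \<in> {0..1}" using shift_param_range s t by auto
    have "squeeze 0 1 t \<le> t" using t by (simp add: squeeze_le)
    then have "shift_param (s, t) \<le> (1 - s) * t + s * t"
      unfolding shift_param_def using s by (simp add: mult_left_mono)
    then show "shift_param (s, t) < dyadic_point m 0" using tm by (simp add: dyadic_point_0 algebra_simps)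
  qed
  moreover have "dyadic_concat e (skip_segment \<alpha> \<phi> m) t = dyadic_concat e (\<lambda>j. \<alpha> (\<phi> j)) t"
    using ny nm approx_perm_below[OF bij] by (simp add: dyadic_concat_point skip_segment_def)
  ultimately show ?thesis by (simp add: swap_homotopy_def pre_Delta_monoid_unit[OF monoid])
qed

lemma swap_homotopy_tail_values:
  assumes s: "s \<in> {0..1}" and t: "t \<in> {0..1}" and tm: "1 - (1/2)^m \<le> t"
    and N: "\<forall>j\<ge>m. N \<le> approx_perm \<phi> m j"
  shows "swap_homotopy mul e \<alpha> \<phi> m (s, t) \<in> set_mult mul (tail_values e \<alpha> N) (tail_values e \<alpha> N)"
proof -
  have p: "(s, t) \<in> {0..1} \<times> {0..1}" using s t by auto
  have sub: "insert e {\<alpha> (approx_perm \<phi> m j) y |j y. 0 \<le> y \<and> y < 1 \<and> m \<le> j} \<subseteq> tail_values e \<alpha> N"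
  proof
    fix x assume "x \<in> insert e {\<alpha> (approx_perm \<phi> m j) y |j y. 0 \<le> y \<and> y < 1 \<and> m \<le> j}"
    then consider "x = e" | j y where "x = \<alpha> (approx_perm \<phi> m j) y" "0 \<le> y" "y < 1" "m \<le> j" by blast
    then show "x \<in> tail_values e \<alpha> N"
    proof cases
      case (2 j y) then show ?thesis using N unfolding tail_values_def by blast
    qed (simp add: tail_values_def)
  qed
  have "dyadic_concat e (skip_segment \<alpha> \<phi> m) (swap_param m (approx_pos \<phi> m - m) (s, t))
      \<in> insert e {\<alpha> (approx_perm \<phi> m j) y |j y. 0 \<le> y \<and> y < 1 \<and> m \<le> j}"
    by (rule skip_segment_tail_values[OF swap_param_range[OF p] swap_param_ge[OF s tm]])
  moreover have "dyadic_concat e (segment e \<alpha> \<phi> m) (shift_param (s, t))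
      \<in> insert e {\<alpha> (approx_perm \<phi> m j) y |j y. 0 \<le> y \<and> y < 1 \<and> m \<le> j}"
    by (rule segment_tail_values[OF shift_param_range[OF p]])
  ultimately show ?thesis unfolding swap_homotopy_def using sub by (blast intro: set_multI)
qed

lemma swap_homotopy_values:
  assumes "p \<in> {0..1} \<times> {0..1}"
  shows "swap_homotopy mul e \<alpha> \<phi> m p \<in> set_mult mul (concat_values e \<alpha>) (concat_values e \<alpha>)"
proof -
  have "dyadic_concat e (skip_segment \<alpha> \<phi> m) (swap_param m (approx_pos \<phi> m - m) p) \<in> concat_values e \<alpha>"
    by (rule skip_segment_values[OF swap_param_range[OF assms]])
  moreover have "dyadic_concat e (segment e \<alpha> \<phi> m) (shift_param p) \<in> concat_values e \<alpha>"
    by (rule segment_values[OF shift_param_range[OF assms]])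
  ultimately show ?thesis unfolding swap_homotopy_def by (rule set_multI)
qed

end


lemma dyadic_concat_reindex_homotopic_inf_concat:
  assumes "pre_Delta_monoid mul e" "null_sequence e \<alpha>" "inj g"
  shows "homotopic_paths (set_mult mul (concat_values e \<alpha>) (concat_values e \<alpha>))
           (dyadic_concat e (\<lambda>j. \<alpha> (g j))) (inf_concat e (\<lambda>j. \<alpha> (g j)))"
proof (rule dyadic_concat_homotopic_inf_concat)
  show "path (dyadic_concat e (\<lambda>j. \<alpha> (g j)))"
    unfolding path_def by (rule continuous_on_dyadic_concat[OF null_sequence_reindex[OF assms(2,3)]])
  show "path_image (dyadic_concat e (\<lambda>j. \<alpha> (g j))) \<subseteq> set_mult mul (concat_values e \<alpha>) (concat_values e \<alpha>)"
  proof
    fix x assume "x \<in> path_image (dyadic_concat e (\<lambda>j. \<alpha> (g j)))"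
    then obtain u where "u \<in> {0..1}" "x = dyadic_concat e (\<lambda>j. \<alpha> (g j)) u"
      unfolding path_image_def by auto
    then show "x \<in> set_mult mul (concat_values e \<alpha>) (concat_values e \<alpha>)"
      using dyadic_concat_reindex_values[of u e \<alpha> g] concat_values_subset_set_mult[OF assms(1), of \<alpha>]
      by blast
  qed
qed

definition glued_homotopy ::
  "('a \<Rightarrow> 'a \<Rightarrow> 'a) \<Rightarrow> 'a \<Rightarrow> (nat \<Rightarrow> real \<Rightarrow> 'a) \<Rightarrow> (nat \<Rightarrow> nat) \<Rightarrow> real \<times> real \<Rightarrow> 'a" where
  "glued_homotopy mul e \<alpha> \<phi> p =
     (if fst p < 1 then swap_homotopy mul e \<alpha> \<phi> (dyadic_block (fst p)) (dyadic_coord (fst p), snd p)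
      else dyadic_concat e (\<lambda>j. \<alpha> (\<phi> j)) (snd p))"

context
  fixes mul :: "'a::topological_space \<Rightarrow> 'a \<Rightarrow> 'a" and e :: 'a
    and \<alpha> :: "nat \<Rightarrow> real \<Rightarrow> 'a" and \<phi> :: "nat \<Rightarrow> nat"
  assumes monoid: "pre_Delta_monoid mul e" and null: "null_sequence e \<alpha>" and bij: "bij \<phi>"
begin

lemma swap_homotopy_tail:
  assumes "open V" "e \<in> V"
  shows "\<exists>M. \<forall>m\<ge>M. \<forall>s\<in>{0..1}. \<forall>t\<in>{0..1}. 1 - (1/2)^m \<le> t \<longrightarrow> swap_homotopy mul e \<alpha> \<phi> m (s, t) \<in> V"
proof -
  obtain N where N: "set_mult mul (tail_values e \<alpha> N) (tail_values e \<alpha> N) \<subseteq> V"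
    using tail_values_mult_subset[OF monoid null assms] by blast
  obtain M where "\<forall>m\<ge>M. \<forall>j\<ge>m. N \<le> approx_perm \<phi> m j" using approx_perm_tail[OF bij] by blast
  then show ?thesis
    using swap_homotopy_tail_values[OF monoid null bij] N by blast
qed

lemma continuous_on_glued_homotopy: "continuous_on ({0..1} \<times> {0..1}) (glued_homotopy mul e \<alpha> \<phi>)"
  unfolding continuous_on_eq_continuous_within
proof
  fix p :: "real \<times> real" assume p: "p \<in> {0..1} \<times> {0..1}"
  then obtain s t where st: "p = (s, t)" "s \<in> {0..1}" "t \<in> {0..1}" by auto
  show "continuous (at p within {0..1} \<times> {0..1}) (glued_homotopy mul e \<alpha> \<phi>)"
  proof (cases "s < 1")
    case True
    show ?thesis unfolding st(1)
    proof (rule continuous_within_glued[where f = "swap_homotopy mul e \<alpha> \<phi>"])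
      show "\<And>m. continuous_on ({0..1} \<times> {0..1}) (swap_homotopy mul e \<alpha> \<phi> m)"
        by (rule continuous_on_swap_homotopy[OF monoid null bij])
      show "\<And>m t. t \<in> {0..1} \<Longrightarrow> swap_homotopy mul e \<alpha> \<phi> m (1, t) = swap_homotopy mul e \<alpha> \<phi> (Suc m) (0, t)"
        using swap_homotopy_start[OF monoid null bij] swap_homotopy_finish[OF monoid null bij] by simp
    qed (use True st in \<open>auto simp: glued_homotopy_def\<close>)
  next
    case False
    then have "s = 1" using st by auto
    show ?thesis unfolding st(1) \<open>s = 1\<close>
    proof (rule continuous_at_end_glued[where Hs = "swap_homotopy mul e \<alpha> \<phi>"])
      show "continuous_on {0..1} (dyadic_concat e (\<lambda>j. \<alpha> (\<phi> j)))"
        by (rule continuous_on_dyadic_concat[OF null_sequence_reindex[OF null bij_is_inj[OF bij]]])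
      show "\<And>m s t. s \<in> {0..1} \<Longrightarrow> t \<in> {0..1} \<Longrightarrow> t < 1 - (1/2)^m \<Longrightarrow>
          swap_homotopy mul e \<alpha> \<phi> m (s, t) = dyadic_concat e (\<lambda>j. \<alpha> (\<phi> j)) t"
        by (rule swap_homotopy_initial[OF monoid null bij])
      show "\<And>V. open V \<Longrightarrow> dyadic_concat e (\<lambda>j. \<alpha> (\<phi> j)) 1 \<in> V \<Longrightarrow>
          \<exists>M. \<forall>m\<ge>M. \<forall>s\<in>{0..1}. \<forall>t\<in>{0..1}. 1 - (1/2)^m \<le> t \<longrightarrow> swap_homotopy mul e \<alpha> \<phi> m (s, t) \<in> V"
        using swap_homotopy_tail by (simp add: dyadic_concat_1)
    qed (use st in \<open>auto simp: glued_homotopy_def\<close>)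
  qed
qed

lemma glued_homotopy_values:
  assumes p: "p \<in> {0..1} \<times> {0..1}"
  shows "glued_homotopy mul e \<alpha> \<phi> p \<in> set_mult mul (concat_values e \<alpha>) (concat_values e \<alpha>)"
proof (cases "fst p < 1")
  case True
  then have "(dyadic_coord (fst p), snd p) \<in> {0..1} \<times> {0..1}"
    using dyadic_coord_range[of "fst p"] p by auto
  then show ?thesis
    using True swap_homotopy_values[OF monoid null bij] by (simp add: glued_homotopy_def)
next
  case False
  have "dyadic_concat e (\<lambda>j. \<alpha> (\<phi> j)) (snd p) \<in> concat_values e \<alpha>"
    using p by (intro dyadic_concat_reindex_values) auto
  then show ?thesis
    using False concat_values_subset_set_mult[OF monoid, of \<alpha>] by (auto simp: glued_homotopy_def)
qed

lemma dyadic_concat_reindex_homotopic: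
  "homotopic_paths (set_mult mul (concat_values e \<alpha>) (concat_values e \<alpha>))
     (dyadic_concat e \<alpha>) (dyadic_concat e (\<lambda>j. \<alpha> (\<phi> j)))"
  unfolding homotopic_paths
proof (intro exI conjI ballI)
  show "continuous_on ({0..1} \<times> {0..1}) (glued_homotopy mul e \<alpha> \<phi>)"
    by (rule continuous_on_glued_homotopy)
  show "glued_homotopy mul e \<alpha> \<phi> \<in> {0..1} \<times> {0..1} \<rightarrow> set_mult mul (concat_values e \<alpha>) (concat_values e \<alpha>)"
    using glued_homotopy_values by blast
  fix x :: real assume x: "x \<in> {0..1}"
  have "dyadic_block 0 = 0" "dyadic_coord 0 = 0" using dyadic_block_coord_low[of 0] by auto
  then show "glued_homotopy mul e \<alpha> \<phi> (0, x) = dyadic_concat e \<alpha> x"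
    using swap_homotopy_start[OF monoid null bij x, of 0] by (simp add: glued_homotopy_def)
  show "glued_homotopy mul e \<alpha> \<phi> (1, x) = dyadic_concat e (\<lambda>j. \<alpha> (\<phi> j)) x"
    by (simp add: glued_homotopy_def)
next
  fix t :: real assume "t \<in> {0..1}"
  have "glued_homotopy mul e \<alpha> \<phi> (t, 0) = e" "glued_homotopy mul e \<alpha> \<phi> (t, 1) = e"
    using swap_homotopy_ends[OF monoid null bij]
      dyadic_concat_0[OF null_sequence_reindex[OF null bij_is_inj[OF bij]]]
    by (simp_all add: glued_homotopy_def dyadic_concat_1)
  then show "pathstart (glued_homotopy mul e \<alpha> \<phi> \<circ> Pair t) = pathstart (dyadic_concat e \<alpha>)"
    "pathfinish (glued_homotopy mul e \<alpha> \<phi> \<circ> Pair t) = pathfinish (dyadic_concat e \<alpha>)"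
    by (simp_all add: pathstart_def pathfinish_def dyadic_concat_0[OF null] dyadic_concat_1)
qed

end

theorem mainTheorem10:
  fixes mul :: "'a::topological_space \<Rightarrow> 'a \<Rightarrow> 'a" and e :: 'a
    and \<alpha> :: "nat \<Rightarrow> real \<Rightarrow> 'a" and \<phi> :: "nat \<Rightarrow> nat"
  assumes "pre_Delta_monoid mul e"
    and "path_connected (UNIV :: 'a set)"
    and "null_sequence e \<alpha>"
    and "bij \<phi>"
  shows "homotopic_paths
           (set_mult mul (path_image (inf_concat e \<alpha>)) (path_image (inf_concat e \<alpha>)))
           (inf_concat e \<alpha>) (inf_concat e (\<lambda>n. \<alpha> (\<phi> n)))"
proof -
  let ?S = "set_mult mul (concat_values e \<alpha>) (concat_values e \<alpha>)"
  have "homotopic_paths ?S (inf_concat e \<alpha>) (dyadic_concat e \<alpha>)"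
    using homotopic_paths_sym[OF dyadic_concat_reindex_homotopic_inf_concat[OF assms(1,3) inj_on_id]]
    by (simp add: id_def)
  also have "homotopic_paths ?S (dyadic_concat e \<alpha>) (dyadic_concat e (\<lambda>n. \<alpha> (\<phi> n)))"
    by (rule dyadic_concat_reindex_homotopic[OF assms(1,3,4)])
  also have "homotopic_paths ?S (dyadic_concat e (\<lambda>n. \<alpha> (\<phi> n))) (inf_concat e (\<lambda>n. \<alpha> (\<phi> n)))"
    by (rule dyadic_concat_reindex_homotopic_inf_concat[OF assms(1,3) bij_is_inj[OF assms(4)]])
  finally have "homotopic_paths ?S (inf_concat e \<alpha>) (inf_concat e (\<lambda>n. \<alpha> (\<phi> n)))" .
  moreover have "?S \<subseteq> set_mult mul (path_image (inf_concat e \<alpha>)) (path_image (inf_concat e \<alpha>))"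
    using concat_values_subset_path_image unfolding set_mult_def by blast
  ultimately show ?thesis by (rule homotopic_paths_subset)
qed

end
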